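(* Let $\mathsf{CL}'$ be the calculus $\mathsf{CL}$ in which the rule L$>$ is replaced by L$>^\star$ and the rule Mon$\forall$ is added. For every formula $A_0$ and world label $x_0$, root-first proof search for a $\mathsf{CL}'$-derivation of $\Rightarrow x_0:A_0$ built in accordance with the proof search strategy terminates in a finite number of steps, every branch ending with either an initial sequent or a saturated sequent.
   Context: Syntax: world labels, neighbourhood labels; relational atoms $a\in N(x)$, $x\in a$, $a\subseteq b$; labelled formulas: these, $x:A$, $a\Vdash^\exists A$, $a\Vdash^\forall A$, $x\Vdash_aA|B$, for $A,B\in\mathcal{L}::=p\mid\bot\mid A\wedge B\mid A\lor B\mid A\to B\mid A>B$. Sequents: multisets, relational atoms only on the left. Rules of $\mathsf{CL}'$ (premisses / conclusion; "fresh": label not in conclusion): initial sequents $x:p,\Gamma\Rightarrow\Delta,x:p$ ($p$ atomic), $x:\bot,\Gamma\Rightarrow\Delta$; G3 rules for $\wedge,\vee,\to$ on $x:A$; L$\forall$: $x:A,x\in a,a\Vdash^\forall A,\Gamma\Rightarrow\Delta$ / $x\in a,a\Vdash^\forall A,\Gamma\Rightarrow\Delta$; R$\forall$ (x fresh): $x\in a,\Gamma\Rightarrow\Delta,x:A$ / $\Gamma\Rightarrow\Delta,a\Vdash^\forall A$; L$\exists$ (x fresh): $x\in a,x:A,\Gamma\Rightarrow\Delta$ / $a\Vdash^\exists A,\Gamma\Rightarrow\Delta$; R$\exists$: $x\in a,\Gamma\Rightarrow\Delta,x:A,a\Vdash^\exists A$ / $x\in a,\Gamma\Rightarrow\Delta,a\Vdash^\exists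 A$; R$>$ (a fresh): $a\in N(x),a\Vdash^\exists A,\Gamma\Rightarrow\Delta,x\Vdash_aA|B$ / $\Gamma\Rightarrow\Delta,x:A>B$; L$>^\star$: $a\in N(x),x:A>B,\Gamma\Rightarrow\Delta,a\Vdash^\exists A$ and $a\Vdash^\exists A,x\Vdash_aA|B,a\in N(x),x:A>B,\Gamma\Rightarrow\Delta$ / $a\in N(x),x:A>B,\Gamma\Rightarrow\Delta$; R$|$: $c\in N(x),c\subseteq a,\Gamma\Rightarrow\Delta,x\Vdash_aA|B,c\Vdash^\exists A$ and $c\in N(x),c\subseteq a,\Gamma\Rightarrow\Delta,x\Vdash_aA|B,c\Vdash^\forall A\to B$ / $c\in N(x),c\subseteq a,\Gamma\Rightarrow\Delta,x\Vdash_aA|B$; L$|$ (c fresh): $c\in N(x),c\subseteq a,c\Vdash^\exists A,c\Vdash^\forall A\to B,\Gamma\Rightarrow\Delta$ / $x\Vdash_aA|B,\Gamma\Rightarrow\Delta$; Ref: $a\subseteq a,\Gamma\Rightarrow\Delta$ / $\Gamma\Rightarrow\Delta$; Tr: $c\subseteq a,c\subseteq b,b\subseteq a,\Gamma\Rightarrow\Delta$ / $c\subseteq b,b\subseteq a,\Gamma\Rightarrow\Delta$; L$\subseteq$: $x\in a,a\subseteq b,x\in b,\Gamma\Rightarrow\Delta$ / $x\in a,a\subseteq b,\Gamma\Rightarrow\Delta$; Mon$\forall$: $b\subseteq a,b\Vdash^\forall A,a\Vdash^\forall A,\Gamma\Rightarrow\Delta$ / $b\subseteq a,a\Vdash^\forall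 A,\Gamma\Rightarrow\Delta$. For a branch $S_0,S_1,\dots$ with $S_0={}\Rightarrow x_0:A_0$ and $S_k=\Gamma_k\Rightarrow\Delta_k$, write $\downarrow\Gamma_k$ ($\downarrow\Delta_k$) for the union of the antecedents (succedents) of $S_0,\dots,S_k$. Saturation conditions for $\Gamma\Rightarrow\Delta=S_k$ (with $\downarrow\Gamma,\downarrow\Delta$ the corresponding unions): L$\wedge$: $x:A\wedge B\in\downarrow\Gamma$ implies $x:A,x:B\in\downarrow\Gamma$; R$\wedge$: $x:A\wedge B\in\downarrow\Delta$ implies $x:A$ or $x:B$ in $\downarrow\Delta$; L$\vee$: $x:A\vee B\in\downarrow\Gamma$ implies $x:A$ or $x:B$ in $\downarrow\Gamma$; R$\vee$: $x:A\vee B\in\downarrow\Delta$ implies $x:A,x:B\in\downarrow\Delta$; L$\to$: $x:A\to B\in\downarrow\Gamma$ implies $x:B\in\downarrow\Gamma$ or $x:A\in\downarrow\Delta$; R$\to$: $x:A\to B\in\Delta$ implies $x:A\in\downarrow\Gamma$ and $x:B\in\downarrow\Delta$; Ref: if $a$ occurs in $\Gamma\cup\Delta$ then $a\subseteq a\in\Gamma$; Tr: $a\subseteq b,b\subseteq c\in\Gamma$ implies $a\subseteq c\in\Gamma$; L$\subseteq$: $x\in a,a\subseteq b\in\Gamma$ implies $x\in b\in\Gamma$; L$\forall$: $x\in a,a\Vdash^\forall A\in\Gamma$ implies $x:A\in\downarrow\Gamma$; R$\forall$: $a\Vdash^\forall A\in\downarrow\Delta$ implies for some $x$, $x\in a\in\Gamma$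 and $x:A\in\downarrow\Delta$; L$\exists$: $a\Vdash^\exists A\in\downarrow\Gamma$ implies for some $x$, $x\in a\in\Gamma$ and $x:A\in\downarrow\Gamma$; R$\exists$: $x\in a\in\Gamma$ and $a\Vdash^\exists A\in\Delta$ imply $x:A\in\downarrow\Delta$; R$>$: $x:A>B\in\downarrow\Delta$ implies for some $a$, $a\in N(x)\in\Gamma$, $a\Vdash^\exists A\in\downarrow\Gamma$, $x\Vdash_aA|B\in\Delta$; L$>^\star$: $a\in N(x),x:A>B\in\Gamma$ imply $a\Vdash^\exists A\in\downarrow\Delta$, or both $a\Vdash^\exists A$ and $x\Vdash_aA|B$ in $\downarrow\Gamma$; R$|$: $c\in N(x),c\subseteq a\in\Gamma$ and $x\Vdash_aA|B\in\Delta$ imply $c\Vdash^\exists A\in\Delta$ or $c\Vdash^\forall A\to B\in\downarrow\Delta$; L$|$: $x\Vdash_aA|B\in\downarrow\Gamma$ implies for some $c$, $c\in N(x),c\subseteq a\in\Gamma$, $c\Vdash^\exists A\in\downarrow\Gamma$ and $c\Vdash^\forall A\to B\in\Gamma$; Mon$\forall$: $b\subseteq a,a\Vdash^\forall A\in\Gamma$ imply $b\Vdash^\forall A\in\Gamma$. A sequent is saturated if no $x:p$ is in $\Gamma\cap\Delta$, no $x:\bot$ is in $\Gamma$, and it satisfies all these saturation conditions. Proof search strategy: (1) rules introducing a new label (R$\forall$, L$\exists$, R$>$, L$|$: dynamic rules) are applied only if no other (static) rule is applicable, except that R$>$ is applied before L$>^\star$; (2) a rule is not applied to a sequent that satisfies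 the saturation condition associated with that rule. *)

theory Defs
  imports Main "HOL-Library.Multiset"
begin

datatype fm = Atm nat | Bot | Conj fm fm | Disj fm fm | Imp fm fm | Cond fm fm

type_synonym wlab = nat
type_synonym nlab = nat

datatype lf =
    InN nlab wlab              (* a \<in> N(x)      : InN a x *)
  | Mem wlab nlab
  | Sub nlab nlab
  | Lab wlab fm
  | Exi nlab fm                (* a forces-exists A : Exi a A *)
  | Unv nlab fm                (* a forces-forall A : Unv a A *)
  | CondL wlab nlab fm fm      (* x forces_a A|B : CondL x a A B *)

type_synonym sequent = "lf multiset \<times> lf multiset"

fun wlabs :: "lf \<Rightarrow> wlab set" where
  "wlabs (InN a x) = {x}"
| "wlabs (Mem x a) = {x}"
| "wlabs (Sub a b) = {}"
| "wlabs (Lab x A) = {x}"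
| "wlabs (Exi a A) = {}"
| "wlabs (Unv a A) = {}"
| "wlabs (CondL x a A B) = {x}"

fun nlabs :: "lf \<Rightarrow> nlab set" where
  "nlabs (InN a x) = {a}"
| "nlabs (Mem x a) = {a}"
| "nlabs (Sub a b) = {a, b}"
| "nlabs (Lab x A) = {}"
| "nlabs (Exi a A) = {a}"
| "nlabs (Unv a A) = {a}"
| "nlabs (CondL x a A B) = {a}"

definition seq_wlabs :: "sequent \<Rightarrow> wlab set" where
  "seq_wlabs S = (\<Union>\<phi> \<in> set_mset (fst S) \<union> set_mset (snd S). wlabs \<phi>)"

definition seq_nlabs :: "sequent \<Rightarrow> nlab set" where
  "seq_nlabs S = (\<Union>\<phi> \<in> set_mset (fst S) \<union> set_mset (snd S). nlabs \<phi>)"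

text \<open>A branch prefix S_0, ..., S_k is represented by the (nonempty) list H = [S_0, ..., S_k];
  the current sequent is last H.\<close>

definition dG :: "sequent list \<Rightarrow> lf set" where
  "dG H = (\<Union>S \<in> set H. set_mset (fst S))"

definition dD :: "sequent list \<Rightarrow> lf set" where
  "dD H = (\<Union>S \<in> set H. set_mset (snd S))"

definition initial :: "sequent \<Rightarrow> bool" where
  "initial S \<longleftrightarrow> (\<exists>x p. Lab x (Atm p) \<in># fst S \<and> Lab x (Atm p) \<in># snd S) \<or> (\<exists>x. Lab x Bot \<in># fst S)"

datatype rname = LAnd | RAnd | LOr | ROr | LImp | RImp | LAll | RAll | LEx | REx
  | RCnd | LCndStar | RBar | LBar | Ref | Tr | LSub | MonAll

definition dynamic :: "rname \<Rightarrow> bool" where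
  "dynamic r \<longleftrightarrow> r \<in> {RAll, LEx, RCnd, LBar}"

text \<open>ap H r Ps: the rule r has an instance whose conclusion is the current sequent last H,
  whose premisses are Ps, and whose associated saturation condition (w.r.t. the branch H)
  is NOT satisfied, i.e. condition (2) of the strategy allows applying it.\<close>

inductive ap :: "sequent list \<Rightarrow> rname \<Rightarrow> sequent list \<Rightarrow> bool" where
  LAnd: "last H = (add_mset (Lab x (Conj A B)) G, D) \<Longrightarrow>
    \<not> (Lab x A \<in> dG H \<and> Lab x B \<in> dG H) \<Longrightarrow>
    ap H LAnd [(add_mset (Lab x A) (add_mset (Lab x B) G), D)]"
| RAnd: "last H = (G, add_mset (Lab x (Conj A B)) D) \<Longrightarrow>
    \<not> (Lab x A \<in> dD H \<or> Lab x B \<in> dD H) \<Longrightarrow>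
    ap H RAnd [(G, add_mset (Lab x A) D), (G, add_mset (Lab x B) D)]"
| LOr: "last H = (add_mset (Lab x (Disj A B)) G, D) \<Longrightarrow>
    \<not> (Lab x A \<in> dG H \<or> Lab x B \<in> dG H) \<Longrightarrow>
    ap H LOr [(add_mset (Lab x A) G, D), (add_mset (Lab x B) G, D)]"
| ROr: "last H = (G, add_mset (Lab x (Disj A B)) D) \<Longrightarrow>
    \<not> (Lab x A \<in> dD H \<and> Lab x B \<in> dD H) \<Longrightarrow>
    ap H ROr [(G, add_mset (Lab x A) (add_mset (Lab x B) D))]"
| LImp: "last H = (add_mset (Lab x (Imp A B)) G, D) \<Longrightarrow>
    \<not> (Lab x B \<in> dG H \<or> Lab x A \<in> dD H) \<Longrightarrow>
    ap H LImp [(G, add_mset (Lab x A) D), (add_mset (Lab x B) G, D)]"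
| RImp: "last H = (G, add_mset (Lab x (Imp A B)) D) \<Longrightarrow>
    \<not> (Lab x A \<in> dG H \<and> Lab x B \<in> dD H) \<Longrightarrow>
    ap H RImp [(add_mset (Lab x A) G, add_mset (Lab x B) D)]"
| LAll: "last H = (add_mset (Mem x a) (add_mset (Unv a A) G), D) \<Longrightarrow>
    \<not> (Lab x A \<in> dG H) \<Longrightarrow>
    ap H LAll [(add_mset (Lab x A) (add_mset (Mem x a) (add_mset (Unv a A) G)), D)]"
| RAll: "last H = (G, add_mset (Unv a A) D) \<Longrightarrow>
    x \<notin> seq_wlabs (last H) \<Longrightarrow>
    \<not> (\<exists>y. Mem y a \<in># G \<and> Lab y A \<in> dD H) \<Longrightarrow>
    ap H RAll [(add_mset (Mem x a) G, add_mset (Lab x A) D)]"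
| LEx: "last H = (add_mset (Exi a A) G, D) \<Longrightarrow>
    x \<notin> seq_wlabs (last H) \<Longrightarrow>
    \<not> (\<exists>y. Mem y a \<in># fst (last H) \<and> Lab y A \<in> dG H) \<Longrightarrow>
    ap H LEx [(add_mset (Mem x a) (add_mset (Lab x A) G), D)]"
| REx: "last H = (add_mset (Mem x a) G, add_mset (Exi a A) D) \<Longrightarrow>
    \<not> (Lab x A \<in> dD H) \<Longrightarrow>
    ap H REx [(add_mset (Mem x a) G, add_mset (Lab x A) (add_mset (Exi a A) D))]"
| RCnd: "last H = (G, add_mset (Lab x (Cond A B)) D) \<Longrightarrow>
    a \<notin> seq_nlabs (last H) \<Longrightarrow>
    \<not> (\<exists>b. InN b x \<in># fst (last H) \<and> Exi b A \<in> dG H \<and> CondL x b A B \<in># snd (last H)) \<Longrightarrow>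
    ap H RCnd [(add_mset (InN a x) (add_mset (Exi a A) G), add_mset (CondL x a A B) D)]"
| LCndStar: "last H = (add_mset (InN a x) (add_mset (Lab x (Cond A B)) G), D) \<Longrightarrow>
    \<not> (Exi a A \<in> dD H \<or> (Exi a A \<in> dG H \<and> CondL x a A B \<in> dG H)) \<Longrightarrow>
    ap H LCndStar
      [(add_mset (InN a x) (add_mset (Lab x (Cond A B)) G), add_mset (Exi a A) D),
       (add_mset (Exi a A) (add_mset (CondL x a A B) (add_mset (InN a x) (add_mset (Lab x (Cond A B)) G))), D)]"
| RBar: "last H = (add_mset (InN c x) (add_mset (Sub c a) G), add_mset (CondL x a A B) D) \<Longrightarrow>
    \<not> (Exi c A \<in># snd (last H) \<or> Unv c (Imp A B) \<in> dD H) \<Longrightarrow>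
    ap H RBar
      [(add_mset (InN c x) (add_mset (Sub c a) G), add_mset (CondL x a A B) (add_mset (Exi c A) D)),
       (add_mset (InN c x) (add_mset (Sub c a) G), add_mset (CondL x a A B) (add_mset (Unv c (Imp A B)) D))]"
| LBar: "last H = (add_mset (CondL x a A B) G, D) \<Longrightarrow>
    c \<notin> seq_nlabs (last H) \<Longrightarrow>
    \<not> (\<exists>d. InN d x \<in># fst (last H) \<and> Sub d a \<in># fst (last H) \<and> Exi d A \<in> dG H
           \<and> Unv d (Imp A B) \<in># fst (last H)) \<Longrightarrow>
    ap H LBar [(add_mset (InN c x) (add_mset (Sub c a) (add_mset (Exi c A) (add_mset (Unv c (Imp A B)) G))), D)]"
| Ref: "last H = (G, D) \<Longrightarrow>
    \<not> (a \<in> seq_nlabs (last H) \<longrightarrow> Sub a a \<in># G) \<Longrightarrow>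
    ap H Ref [(add_mset (Sub a a) G, D)]"
| Tr: "last H = (add_mset (Sub c b) (add_mset (Sub b a) G), D) \<Longrightarrow>
    \<not> (Sub c a \<in># fst (last H)) \<Longrightarrow>
    ap H Tr [(add_mset (Sub c a) (add_mset (Sub c b) (add_mset (Sub b a) G)), D)]"
| LSub: "last H = (add_mset (Mem x a) (add_mset (Sub a b) G), D) \<Longrightarrow>
    \<not> (Mem x b \<in># fst (last H)) \<Longrightarrow>
    ap H LSub [(add_mset (Mem x a) (add_mset (Sub a b) (add_mset (Mem x b) G)), D)]"
| MonAll: "last H = (add_mset (Sub b a) (add_mset (Unv a A) G), D) \<Longrightarrow>
    \<not> (Unv b A \<in># fst (last H)) \<Longrightarrow>
    ap H MonAll [(add_mset (Sub b a) (add_mset (Unv b A) (add_mset (Unv a A) G)), D)]"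

text \<open>step H r Ps: in root-first proof search, having built the branch H (whose last element is
  the current, non-initial, sequent), rule r may be applied with premisses Ps according to the strategy:
  (1) dynamic rules only if no static rule is applicable, except that R> is applied before L>*
  (R> only waits for static rules other than L>*, and L>* is not applied while R> is applicable);
  (2) the rule instance does not satisfy its associated saturation condition (built into ap).\<close>

definition step :: "sequent list \<Rightarrow> rname \<Rightarrow> sequent list \<Rightarrow> bool" where
  "step H r Ps \<longleftrightarrow>
     \<not> initial (last H) \<and> ap H r Ps \<and>
     (dynamic r \<and> r \<noteq> RCnd \<longrightarrow> \<not> (\<exists>r' Ps'. \<not> dynamic r' \<and> ap H r' Ps')) \<and>
     (r = RCnd \<longrightarrow> \<not> (\<exists>r' Ps'. \<not> dynamic r' \<and> r' \<noteq> LCndStar \<and> ap H r' Ps')) \<and>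
     (r = LCndStar \<longrightarrow> \<not> (\<exists>Ps'. ap H RCnd Ps'))"

definition root :: "wlab \<Rightarrow> fm \<Rightarrow> sequent" where
  "root x0 A0 = ({#}, {#Lab x0 A0#})"

inductive branch :: "wlab \<Rightarrow> fm \<Rightarrow> sequent list \<Rightarrow> bool" for x0 A0 where
  start: "branch x0 A0 [root x0 A0]"
| extend: "branch x0 A0 H \<Longrightarrow> step H r Ps \<Longrightarrow> S \<in> set Ps \<Longrightarrow> branch x0 A0 (H @ [S])"

definition saturated :: "sequent list \<Rightarrow> bool" where
  "saturated H \<longleftrightarrow> (let \<Gamma> = fst (last H); \<Delta> = snd (last H) in
     \<not> (\<exists>x p. Lab x (Atm p) \<in># \<Gamma> \<and> Lab x (Atm p) \<in># \<Delta>) \<and>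
     (\<forall>x. Lab x Bot \<notin># \<Gamma>) \<and>
     (\<forall>x A B. Lab x (Conj A B) \<in> dG H \<longrightarrow> Lab x A \<in> dG H \<and> Lab x B \<in> dG H) \<and>
     (\<forall>x A B. Lab x (Conj A B) \<in> dD H \<longrightarrow> Lab x A \<in> dD H \<or> Lab x B \<in> dD H) \<and>
     (\<forall>x A B. Lab x (Disj A B) \<in> dG H \<longrightarrow> Lab x A \<in> dG H \<or> Lab x B \<in> dG H) \<and>
     (\<forall>x A B. Lab x (Disj A B) \<in> dD H \<longrightarrow> Lab x A \<in> dD H \<and> Lab x B \<in> dD H) \<and>
     (\<forall>x A B. Lab x (Imp A B) \<in> dG H \<longrightarrow> Lab x B \<in> dG H \<or> Lab x A \<in> dD H) \<and>
     (\<forall>x A B. Lab x (Imp A B) \<in># \<Delta> \<longrightarrow> Lab x A \<in> dG H \<and> Lab x B \<in> dD H) \<and>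
     (\<forall>a. a \<in> seq_nlabs (last H) \<longrightarrow> Sub a a \<in># \<Gamma>) \<and>
     (\<forall>a b c. Sub a b \<in># \<Gamma> \<and> Sub b c \<in># \<Gamma> \<longrightarrow> Sub a c \<in># \<Gamma>) \<and>
     (\<forall>x a b. Mem x a \<in># \<Gamma> \<and> Sub a b \<in># \<Gamma> \<longrightarrow> Mem x b \<in># \<Gamma>) \<and>
     (\<forall>x a A. Mem x a \<in># \<Gamma> \<and> Unv a A \<in># \<Gamma> \<longrightarrow> Lab x A \<in> dG H) \<and>
     (\<forall>a A. Unv a A \<in> dD H \<longrightarrow> (\<exists>x. Mem x a \<in># \<Gamma> \<and> Lab x A \<in> dD H)) \<and>
     (\<forall>a A. Exi a A \<in> dG H \<longrightarrow> (\<exists>x. Mem x a \<in># \<Gamma> \<and> Lab x A \<in> dG H)) \<and>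
     (\<forall>x a A. Mem x a \<in># \<Gamma> \<and> Exi a A \<in># \<Delta> \<longrightarrow> Lab x A \<in> dD H) \<and>
     (\<forall>x A B. Lab x (Cond A B) \<in> dD H \<longrightarrow>
        (\<exists>a. InN a x \<in># \<Gamma> \<and> Exi a A \<in> dG H \<and> CondL x a A B \<in># \<Delta>)) \<and>
     (\<forall>a x A B. InN a x \<in># \<Gamma> \<and> Lab x (Cond A B) \<in># \<Gamma> \<longrightarrow>
        Exi a A \<in> dD H \<or> (Exi a A \<in> dG H \<and> CondL x a A B \<in> dG H)) \<and>
     (\<forall>c x a A B. InN c x \<in># \<Gamma> \<and> Sub c a \<in># \<Gamma> \<and> CondL x a A B \<in># \<Delta> \<longrightarrow>
        Exi c A \<in># \<Delta> \<or> Unv c (Imp A B) \<in> dD H) \<and>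
     (\<forall>x a A B. CondL x a A B \<in> dG H \<longrightarrow>
        (\<exists>c. InN c x \<in># \<Gamma> \<and> Sub c a \<in># \<Gamma> \<and> Exi c A \<in> dG H \<and> Unv c (Imp A B) \<in># \<Gamma>)) \<and>
     (\<forall>a b A. Sub b a \<in># \<Gamma> \<and> Unv a A \<in># \<Gamma> \<longrightarrow> Unv b A \<in># \<Gamma>))"

end

theory Submission
  imports Defs
begin

(* Termination: by condition (2) of the strategy a rule is applied only if its saturation
   condition fails, so every step adds a labelled formula that is new to the branch, and it
   suffices to bound the number of labelled formulas on a branch.  Their formulas lie in a finite
   closure of A0.  Each label is identified by its ancestry, the list of dynamic rule instances
   that created it and its ancestors; ancestries are injective on the labels of the current
   sequent.  Along an ancestry every R> step enters a conditional, so it has at most 2 deg A0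
   entries other than L| entries, and a run of L| entries repeats no instance, because Mon\<forall>
   and Ref, being static, would already have made a repeated L| instance satisfied.  So only
   finitely many ancestries, hence labelled formulas, can occur.

   Saturation: a formula leaves the current sequent only when it is reduced, which fulfils its
   saturation condition for good; when no rule applies, the conditions of the formulas still
   present and the local conditions hold as well. *)

section \<open>Subformulas and conditional degree\<close>

fun subfms :: "fm \<Rightarrow> fm set" where
  "subfms (Atm p) = {Atm p}"
| "subfms Bot = {Bot}"
| "subfms (Conj A B) = insert (Conj A B) (subfms A \<union> subfms B)"
| "subfms (Disj A B) = insert (Disj A B) (subfms A \<union> subfms B)"
| "subfms (Imp A B) = insert (Imp A B) (subfms A \<union> subfms B)"
| "subfms (Cond A B) = insert (Cond A B) (subfms A \<union> subfms B)"

lemma subfms_refl: "A \<in> subfms A"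
  by (cases A) auto

lemma subfms_trans: "B \<in> subfms A \<Longrightarrow> subfms B \<subseteq> subfms A"
  by (induction A) auto

lemma finite_subfms: "finite (subfms A)"
  by (induction A) auto

text \<open>The rule L| introduces \<open>c \<Vdash>\<^sup>\<forall> A \<rightarrow> B\<close> for a conditional \<open>A > B\<close>,
  so the formulas of a branch lie in the subformulas of \<open>A\<^sub>0\<close> together with these implications.\<close>

definition fm_closure :: "fm \<Rightarrow> fm set" where
  "fm_closure A0 = subfms A0 \<union> {Imp A B | A B. Cond A B \<in> subfms A0}"

lemma finite_fm_closure: "finite (fm_closure A0)"
proof -
  have "{Imp A B | A B. Cond A B \<in> subfms A0}
      \<subseteq> (\<lambda>F. case F of Cond A B \<Rightarrow> Imp A B | _ \<Rightarrow> F) ` subfms A0"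
    by (auto intro!: image_eqI)
  then show ?thesis
    unfolding fm_closure_def using finite_subfms finite_subset by blast
qed

lemma fm_closure_self: "A0 \<in> fm_closure A0"
  unfolding fm_closure_def using subfms_refl by auto

lemma fm_closure_ConjD: "Conj A B \<in> fm_closure A0 \<Longrightarrow> A \<in> fm_closure A0 \<and> B \<in> fm_closure A0"
  and fm_closure_DisjD: "Disj A B \<in> fm_closure A0 \<Longrightarrow> A \<in> fm_closure A0 \<and> B \<in> fm_closure A0"
  and fm_closure_ImpD: "Imp A B \<in> fm_closure A0 \<Longrightarrow> A \<in> fm_closure A0 \<and> B \<in> fm_closure A0"
  and fm_closure_CondD:
    "Cond A B \<in> fm_closure A0 \<Longrightarrow> A \<in> fm_closure A0 \<and> B \<in> fm_closure A0 \<and> Imp A B \<in> fm_closure A0"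
  unfolding fm_closure_def using subfms_trans subfms_refl by fastforce+

fun cond_degree :: "fm \<Rightarrow> nat" where
  "cond_degree (Atm p) = 0"
| "cond_degree Bot = 0"
| "cond_degree (Conj A B) = max (cond_degree A) (cond_degree B)"
| "cond_degree (Disj A B) = max (cond_degree A) (cond_degree B)"
| "cond_degree (Imp A B) = max (cond_degree A) (cond_degree B)"
| "cond_degree (Cond A B) = Suc (max (cond_degree A) (cond_degree B))"

fun lf_fms :: "lf \<Rightarrow> fm set" where
  "lf_fms (Lab x A) = {A}"
| "lf_fms (Exi a A) = {A}"
| "lf_fms (Unv a A) = {A}"
| "lf_fms (CondL x a A B) = {Cond A B}"
| "lf_fms _ = {}"

section \<open>Ancestries of labels\<close>

text \<open>The ancestry of a label lists, most recent first, the dynamic rule instances that created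
  it and its ancestors: a world created by L\<exists> or R\<forall> from \<open>a \<Vdash>\<^sup>\<exists> A\<close> resp. \<open>a \<Vdash>\<^sup>\<forall> A\<close>
  extends the ancestry of \<open>a\<close> by \<open>ViaEx A\<close> resp. \<open>ViaAll A\<close>, a neighbourhood created by R>
  from \<open>x : A > B\<close> extends that of \<open>x\<close> by \<open>ViaCnd A B\<close>, and one created by L| from
  \<open>x \<Vdash>\<^sub>d A|B\<close> extends that of \<open>d\<close> by \<open>ViaBar A B\<close>.\<close>

datatype origin = ViaEx fm | ViaAll fm | ViaCnd fm fm | ViaBar fm fm

definition origins :: "fm set \<Rightarrow> origin set" where
  "origins C = ViaEx ` C \<union> ViaAll ` C \<union> case_prod ViaCnd ` (C \<times> C) \<union> case_prod ViaBar ` (C \<times> C)"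

lemma origins_simps [simp]:
  "ViaEx A \<in> origins C \<longleftrightarrow> A \<in> C"
  "ViaAll A \<in> origins C \<longleftrightarrow> A \<in> C"
  "ViaCnd A B \<in> origins C \<longleftrightarrow> A \<in> C \<and> B \<in> C"
  "ViaBar A B \<in> origins C \<longleftrightarrow> A \<in> C \<and> B \<in> C"
  by (auto simp: origins_def)

lemma finite_origins: "finite C \<Longrightarrow> finite (origins C)"
  by (simp add: origins_def)

fun bar_run :: "origin list \<Rightarrow> (fm \<times> fm) list" where
  "bar_run (ViaBar A B # p) = (A, B) # bar_run p"
| "bar_run _ = []"

fun weight :: "origin list \<Rightarrow> nat" where
  "weight [] = 0"
| "weight (ViaBar A B # p) = weight p"
| "weight (k # p) = Suc (weight p)"

fun admissible :: "fm set \<Rightarrow> origin list \<Rightarrow> bool" where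
  "admissible C [] \<longleftrightarrow> True"
| "admissible C (k # p) \<longleftrightarrow> k \<in> origins C \<and> distinct (bar_run (k # p)) \<and> admissible C p"

definition ancestries :: "fm set \<Rightarrow> nat \<Rightarrow> origin list set" where
  "ancestries C n = {p. admissible C p \<and> weight p \<le> n}"

lemma set_bar_run_subset: "set p \<subseteq> origins C \<Longrightarrow> set (bar_run p) \<subseteq> C \<times> C"
  by (induction p rule: bar_run.induct) auto

lemma admissible_set: "admissible C p \<Longrightarrow> set p \<subseteq> origins C"
  by (induction p) auto

lemma admissible_distinct_bar_run: "admissible C p \<Longrightarrow> distinct (bar_run p)"
  by (cases p) auto

lemma length_bar_run_le:
  assumes "admissible C p" and "finite C"
  shows "length (bar_run p) \<le> card (C \<times> C)"
proof -
  have "distinct (bar_run p)"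
    by (rule admissible_distinct_bar_run[OF assms(1)])
  moreover have "set (bar_run p) \<subseteq> C \<times> C"
    using set_bar_run_subset admissible_set assms(1) by blast
  ultimately show ?thesis
    using assms(2) by (metis card_mono distinct_card finite_SigmaI)
qed

text \<open>Between two consecutive non-bar entries there are at most \<open>|C \<times> C|\<close> bar entries.\<close>

lemma length_le_weight:
  assumes "admissible C p" and "finite C"
  shows "length p \<le> weight p * (card (C \<times> C) + 1) + length (bar_run p)"
  using assms
proof (induction p)
  case (Cons k p)
  then show ?case
    using length_bar_run_le[of C p] by (cases k) auto
qed simp

lemma finite_ancestries:
  assumes "finite C"
  shows "finite (ancestries C n)"
proof -
  let ?M = "card (C \<times> C)"
  have "ancestries C n \<subseteq> {p. set p \<subseteq> origins C \<and> length p \<le> n * (?M + 1) + ?M}"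
  proof
    fix p assume "p \<in> ancestries C n"
    then have p: "admissible C p" "weight p \<le> n"
      by (auto simp: ancestries_def)
    have "length p \<le> weight p * (?M + 1) + ?M"
      using length_le_weight[OF p(1) assms] length_bar_run_le[OF p(1) assms] by linarith
    also have "\<dots> \<le> n * (?M + 1) + ?M"
      using p(2) by (intro add_le_mono1 mult_le_mono1)
    finally show "p \<in> {p. set p \<subseteq> origins C \<and> length p \<le> n * (?M + 1) + ?M}"
      using admissible_set[OF p(1)] by simp
  qed
  then show ?thesis
    using finite_lists_length_le[OF finite_origins[OF assms]] finite_subset by blast
qed

lemma dG_snoc [simp]: "dG (H @ [S]) = dG H \<union> set_mset (fst S)"
  by (auto simp: dG_def)

lemma dD_snoc [simp]: "dD (H @ [S]) = dD H \<union> set_mset (snd S)"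
  by (auto simp: dD_def)

lemma dG_singleton [simp]: "dG [S] = set_mset (fst S)"
  by (simp add: dG_def)

lemma dD_singleton [simp]: "dD [S] = set_mset (snd S)"
  by (simp add: dD_def)

lemma finite_dG: "finite (dG H)"
  by (simp add: dG_def)

lemma finite_dD: "finite (dD H)"
  by (simp add: dD_def)

lemma last_in_dG: "H \<noteq> [] \<Longrightarrow> \<phi> \<in># fst (last H) \<Longrightarrow> \<phi> \<in> dG H"
  by (auto simp: dG_def)

lemma last_in_dD: "H \<noteq> [] \<Longrightarrow> \<phi> \<in># snd (last H) \<Longrightarrow> \<phi> \<in> dD H"
  by (auto simp: dD_def)

lemma seq_wlabs_simps [simp]:
  "seq_wlabs (add_mset \<phi> G, D) = wlabs \<phi> \<union> seq_wlabs (G, D)"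
  "seq_wlabs (G, add_mset \<phi> D) = wlabs \<phi> \<union> seq_wlabs (G, D)"
  by (auto simp: seq_wlabs_def)

lemma seq_nlabs_simps [simp]:
  "seq_nlabs (add_mset \<phi> G, D) = nlabs \<phi> \<union> seq_nlabs (G, D)"
  "seq_nlabs (G, add_mset \<phi> D) = nlabs \<phi> \<union> seq_nlabs (G, D)"
  by (auto simp: seq_nlabs_def)

lemma wlabs_subset_seq_wlabs: "\<phi> \<in># fst S \<or> \<phi> \<in># snd S \<Longrightarrow> wlabs \<phi> \<subseteq> seq_wlabs S"
  by (auto simp: seq_wlabs_def)

lemma nlabs_subset_seq_nlabs: "\<phi> \<in># fst S \<or> \<phi> \<in># snd S \<Longrightarrow> nlabs \<phi> \<subseteq> seq_nlabs S"
  by (auto simp: seq_nlabs_def)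

lemma finite_seq_wlabs: "finite (seq_wlabs S)"
proof -
  have "finite (wlabs \<phi>)" for \<phi>
    by (cases \<phi>) auto
  then show ?thesis
    by (simp add: seq_wlabs_def)
qed

lemma finite_seq_nlabs: "finite (seq_nlabs S)"
proof -
  have "finite (nlabs \<phi>)" for \<phi>
    by (cases \<phi>) auto
  then show ?thesis
    by (simp add: seq_nlabs_def)
qed

lemma ex_fresh_wlab: "\<exists>x. x \<notin> seq_wlabs S"
  using finite_seq_wlabs ex_new_if_finite infinite_UNIV_nat by blast

lemma ex_fresh_nlab: "\<exists>a. a \<notin> seq_nlabs S"
  using finite_seq_nlabs ex_new_if_finite infinite_UNIV_nat by blast

lemma step_ap: "step H r Ps \<Longrightarrow> ap H r Ps"
  by (simp add: step_def)

lemma no_step_no_ap: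
  assumes not_initial: "\<not> initial (last H)" and no_step: "\<not> (\<exists>r Ps. step H r Ps)"
  shows "\<not> ap H r Ps"
proof
  assume ap: "ap H r Ps"
  have no_static: "\<not> ap H r' Ps'" if "\<not> dynamic r'" "r' \<noteq> LCndStar" for r' Ps'
    using no_step not_initial that by (auto simp: step_def dynamic_def)
  have no_RCnd: "\<not> ap H RCnd Ps'" for Ps'
    using no_step not_initial no_static by (simp add: step_def dynamic_def) blast
  have no_LCndStar: "\<not> ap H LCndStar Ps'" for Ps'
    using no_step not_initial no_RCnd unfolding step_def dynamic_def by blast
  show False
    using ap no_step not_initial no_static no_RCnd no_LCndStar unfolding step_def
    by (cases "dynamic r"; cases "r = LCndStar") blast+
qed

lemma ap_lf_fms_closure:
  "ap H r Ps \<Longrightarrow> \<forall>\<phi> \<in># fst (last H). lf_fms \<phi> \<subseteq> fm_closure A0 \<Longrightarrow>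
     \<forall>\<phi> \<in># snd (last H). lf_fms \<phi> \<subseteq> fm_closure A0 \<Longrightarrow>
     \<forall>S \<in> set Ps. \<forall>\<phi> \<in># fst S + snd S. lf_fms \<phi> \<subseteq> fm_closure A0"
  by (induction rule: ap.cases)
    (simp_all, (blast dest: fm_closure_ConjD fm_closure_DisjD fm_closure_ImpD fm_closure_CondD)+)

fun persistent_ant :: "lf \<Rightarrow> bool" where
  "persistent_ant (InN a x) = True"
| "persistent_ant (Mem x a) = True"
| "persistent_ant (Sub a b) = True"
| "persistent_ant (Unv a A) = True"
| "persistent_ant _ = False"

fun persistent_suc :: "lf \<Rightarrow> bool" where
  "persistent_suc (Exi a A) = True"
| "persistent_suc (CondL x a A B) = True"
| "persistent_suc _ = False"

context
  fixes H r Ps S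
  assumes ap: "ap H r Ps" and premiss: "S \<in> set Ps"
begin

lemma ap_persistent_ant: "\<phi> \<in># fst (last H) \<Longrightarrow> persistent_ant \<phi> \<Longrightarrow> \<phi> \<in># fst S"
  using ap premiss by cases auto

lemma ap_persistent_suc: "\<phi> \<in># snd (last H) \<Longrightarrow> persistent_suc \<phi> \<Longrightarrow> \<phi> \<in># snd S"
  using ap premiss by cases auto

lemma ap_seq_wlabs_mono: "seq_wlabs (last H) \<subseteq> seq_wlabs S"
  using ap premiss by cases auto

lemma ap_seq_nlabs_mono: "seq_nlabs (last H) \<subseteq> seq_nlabs S"
  using ap premiss by cases auto

lemma static_seq_wlabs: "\<not> dynamic r \<Longrightarrow> seq_wlabs S = seq_wlabs (last H)"
  using ap premiss by cases (auto simp: dynamic_def)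

lemma static_seq_nlabs: "\<not> dynamic r \<Longrightarrow> seq_nlabs S = seq_nlabs (last H)"
  using ap premiss by cases (auto simp: dynamic_def)

lemma ap_new_InN:
  "InN c x \<in># fst S \<Longrightarrow> InN c x \<notin># fst (last H) \<Longrightarrow>
     c \<notin> seq_nlabs (last H) \<and> (\<forall>x'. InN c x' \<in># fst S \<longrightarrow> x' = x)"
  using ap premiss by cases (auto simp: seq_nlabs_def)

lemma ap_new_CondL:
  "CondL x d A B \<in># fst S \<Longrightarrow> CondL x d A B \<notin># fst (last H) \<Longrightarrow> InN d x \<in># fst S \<and> Exi d A \<in># fst S"
  using ap premiss by cases auto

end

definition branch_wf :: "fm \<Rightarrow> sequent list \<Rightarrow> bool" where
  "branch_wf A0 H \<longleftrightarrow> H \<noteq> [] \<and>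
    (\<forall>\<phi> \<in> dG H \<union> dD H. wlabs \<phi> \<subseteq> seq_wlabs (last H) \<and> nlabs \<phi> \<subseteq> seq_nlabs (last H)) \<and>
    (\<forall>\<phi> \<in> dG H. persistent_ant \<phi> \<longrightarrow> \<phi> \<in># fst (last H)) \<and>
    (\<forall>\<phi> \<in> dD H. persistent_suc \<phi> \<longrightarrow> \<phi> \<in># snd (last H)) \<and>
    (\<forall>\<phi> \<in> dG H \<union> dD H. lf_fms \<phi> \<subseteq> fm_closure A0) \<and>
    (\<forall>c x x'. InN c x \<in> dG H \<longrightarrow> InN c x' \<in> dG H \<longrightarrow> x = x') \<and>
    (\<forall>x d A B. CondL x d A B \<in> dG H \<longrightarrow> InN d x \<in> dG H \<and> Exi d A \<in> dG H)"

lemma branch_wfD: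
  assumes "branch_wf A0 H"
  shows branch_wf_nonempty: "H \<noteq> []"
    and branch_wf_labels: "\<phi> \<in> dG H \<or> \<phi> \<in> dD H \<Longrightarrow>
      wlabs \<phi> \<subseteq> seq_wlabs (last H) \<and> nlabs \<phi> \<subseteq> seq_nlabs (last H)"
    and branch_wf_persistent_ant: "\<phi> \<in> dG H \<Longrightarrow> persistent_ant \<phi> \<Longrightarrow> \<phi> \<in># fst (last H)"
    and branch_wf_persistent_suc: "\<phi> \<in> dD H \<Longrightarrow> persistent_suc \<phi> \<Longrightarrow> \<phi> \<in># snd (last H)"
    and branch_wf_closure: "\<phi> \<in> dG H \<or> \<phi> \<in> dD H \<Longrightarrow> lf_fms \<phi> \<subseteq> fm_closure A0"
    and branch_wf_InN_unique: "InN c x \<in> dG H \<Longrightarrow> InN c x' \<in> dG H \<Longrightarrow> x = x'"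
    and branch_wf_CondL: "CondL x d A B \<in> dG H \<Longrightarrow> InN d x \<in> dG H \<and> Exi d A \<in> dG H"
  using assms unfolding branch_wf_def by blast+

lemma branch_wf_root: "branch_wf A0 [root x0 A0]"
  by (auto simp: branch_wf_def root_def seq_wlabs_def seq_nlabs_def fm_closure_self)

lemma branch_wf_snoc:
  assumes wf: "branch_wf A0 H" and ap: "ap H r Ps" and S: "S \<in> set Ps"
  shows "branch_wf A0 (H @ [S])"
proof -
  note ne = branch_wf_nonempty[OF wf]
  have labels: "wlabs \<phi> \<subseteq> seq_wlabs S \<and> nlabs \<phi> \<subseteq> seq_nlabs S"
    if "\<phi> \<in> dG (H @ [S]) \<union> dD (H @ [S])" for \<phi>
    using that branch_wf_labels[OF wf, of \<phi>] ap_seq_wlabs_mono[OF ap S] ap_seq_nlabs_mono[OF ap S]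
      wlabs_subset_seq_wlabs[of \<phi> S] nlabs_subset_seq_nlabs[of \<phi> S]
    by simp blast
  have closure: "lf_fms \<phi> \<subseteq> fm_closure A0" if "\<phi> \<in> dG (H @ [S]) \<union> dD (H @ [S])" for \<phi>
    using that ap_lf_fms_closure[OF ap] S branch_wf_closure[OF wf] last_in_dG[OF ne] last_in_dD[OF ne]
    by simp blast
  have InN_unique: "x = x'" if "InN c x \<in> dG (H @ [S])" "InN c x' \<in> dG (H @ [S])" for c x x'
  proof -
    have old: "c \<in> seq_nlabs (last H)" if "InN c y \<in> dG H" for y
      using branch_wf_labels[OF wf, of "InN c y"] that by simp
    have new: "InN c y \<in> dG H \<or> c \<notin> seq_nlabs (last H) \<and> (\<forall>y'. InN c y' \<in># fst S \<longrightarrow> y' = y)"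
      if "InN c y \<in># fst S" for y
      using ap_new_InN[OF ap S, of c y] last_in_dG[OF ne] that by blast
    show ?thesis
      using that old[of x] old[of x'] new[of x] new[of x'] branch_wf_InN_unique[OF wf] by auto
  qed
  have CondL: "InN d x \<in> dG (H @ [S]) \<and> Exi d A \<in> dG (H @ [S])"
    if "CondL x d A B \<in> dG (H @ [S])" for x d A B
  proof -
    have "CondL x d A B \<in> dG H \<or> CondL x d A B \<in># fst S \<and> CondL x d A B \<notin># fst (last H)"
      using that last_in_dG[OF ne] by auto
    then show ?thesis
      using branch_wf_CondL[OF wf] ap_new_CondL[OF ap S] by auto
  qed
  show ?thesis
    unfolding branch_wf_def
    using labels closure InN_unique CondL branch_wf_persistent_ant[OF wf] branch_wf_persistent_suc[OF wf]
      ap_persistent_ant[OF ap S] ap_persistent_suc[OF ap S]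
    by auto
qed

fun ant_fulfilled :: "sequent list \<Rightarrow> lf \<Rightarrow> bool" where
  "ant_fulfilled H (Lab x (Conj A B)) \<longleftrightarrow> Lab x A \<in> dG H \<and> Lab x B \<in> dG H"
| "ant_fulfilled H (Lab x (Disj A B)) \<longleftrightarrow> Lab x A \<in> dG H \<or> Lab x B \<in> dG H"
| "ant_fulfilled H (Lab x (Imp A B)) \<longleftrightarrow> Lab x B \<in> dG H \<or> Lab x A \<in> dD H"
| "ant_fulfilled H (Exi a A) \<longleftrightarrow> (\<exists>x. Mem x a \<in># fst (last H) \<and> Lab x A \<in> dG H)"
| "ant_fulfilled H (CondL x a A B) \<longleftrightarrow> (\<exists>c. InN c x \<in># fst (last H) \<and> Sub c a \<in># fst (last H)
      \<and> Exi c A \<in> dG H \<and> Unv c (Imp A B) \<in># fst (last H))"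
| "ant_fulfilled H _ \<longleftrightarrow> True"

fun suc_fulfilled :: "sequent list \<Rightarrow> lf \<Rightarrow> bool" where
  "suc_fulfilled H (Lab x (Conj A B)) \<longleftrightarrow> Lab x A \<in> dD H \<or> Lab x B \<in> dD H"
| "suc_fulfilled H (Lab x (Disj A B)) \<longleftrightarrow> Lab x A \<in> dD H \<and> Lab x B \<in> dD H"
| "suc_fulfilled H (Lab x (Imp A B)) \<longleftrightarrow> Lab x A \<in> dG H \<and> Lab x B \<in> dD H"
| "suc_fulfilled H (Lab x (Cond A B)) \<longleftrightarrow>
     (\<exists>a. InN a x \<in># fst (last H) \<and> Exi a A \<in> dG H \<and> CondL x a A B \<in># snd (last H))"
| "suc_fulfilled H (Unv a A) \<longleftrightarrow> (\<exists>x. Mem x a \<in># fst (last H) \<and> Lab x A \<in> dD H)"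
| "suc_fulfilled H _ \<longleftrightarrow> True"

definition removed_fulfilled :: "sequent list \<Rightarrow> bool" where
  "removed_fulfilled H \<longleftrightarrow>
     (\<forall>\<phi> \<in> dG H. \<phi> \<in># fst (last H) \<or> ant_fulfilled H \<phi>) \<and>
     (\<forall>\<phi> \<in> dD H. \<phi> \<in># snd (last H) \<or> suc_fulfilled H \<phi>)"

context
  fixes H r Ps S
  assumes ap: "ap H r Ps" and premiss: "S \<in> set Ps"
begin

lemma ant_fulfilled_snoc: "ant_fulfilled H \<phi> \<Longrightarrow> ant_fulfilled (H @ [S]) \<phi>"
  by (cases "(H, \<phi>)" rule: ant_fulfilled.cases) (fastforce intro: ap_persistent_ant[OF ap premiss])+

lemma suc_fulfilled_snoc: "suc_fulfilled H \<phi> \<Longrightarrow> suc_fulfilled (H @ [S]) \<phi>"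
  by (cases "(H, \<phi>)" rule: suc_fulfilled.cases)
    (fastforce intro: ap_persistent_ant[OF ap premiss] ap_persistent_suc[OF ap premiss])+

lemma ap_removed_ant: "\<phi> \<in># fst (last H) \<Longrightarrow> \<phi> \<notin># fst S \<Longrightarrow> ant_fulfilled (H @ [S]) \<phi>"
  using ap premiss by cases auto

lemma ap_removed_suc: "\<phi> \<in># snd (last H) \<Longrightarrow> \<phi> \<notin># snd S \<Longrightarrow> suc_fulfilled (H @ [S]) \<phi>"
  using ap premiss by cases auto

lemma removed_fulfilled_snoc: "removed_fulfilled H \<Longrightarrow> removed_fulfilled (H @ [S])"
  unfolding removed_fulfilled_def dG_snoc dD_snoc last_snoc
  using ant_fulfilled_snoc suc_fulfilled_snoc ap_removed_ant ap_removed_suc by blast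

end

lemma branch_invariants: "branch x0 A0 H \<Longrightarrow> branch_wf A0 H \<and> removed_fulfilled H"
proof (induction rule: branch.induct)
  case start
  then show ?case
    using branch_wf_root by (simp add: removed_fulfilled_def)
next
  case (extend H r Ps S)
  then show ?case
    using branch_wf_snoc removed_fulfilled_snoc step_ap by blast
qed

section \<open>Saturation\<close>

lemma last_ant_split: "\<phi> \<in># fst (last H) \<Longrightarrow> last H = (add_mset \<phi> (fst (last H) - {#\<phi>#}), snd (last H))"
  by simp

lemma last_suc_split: "\<phi> \<in># snd (last H) \<Longrightarrow> last H = (fst (last H), add_mset \<phi> (snd (last H) - {#\<phi>#}))"
  by simp

lemma add_mset_two:
  assumes "\<phi> \<in># M" "\<psi> \<in># M" "\<phi> \<noteq> \<psi>"
  shows "M = add_mset \<phi> (add_mset \<psi> (M - {#\<phi>#} - {#\<psi>#}))"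
  using assms by (metis diff_single_eq_union insert_noteq_member)

lemma last_ant2_split:
  "\<phi> \<in># fst (last H) \<Longrightarrow> \<psi> \<in># fst (last H) \<Longrightarrow> \<phi> \<noteq> \<psi> \<Longrightarrow>
     last H = (add_mset \<phi> (add_mset \<psi> (fst (last H) - {#\<phi>#} - {#\<psi>#})), snd (last H))"
  using add_mset_two by (metis prod.collapse)

lemma last_ant_suc_split:
  "\<phi> \<in># fst (last H) \<Longrightarrow> \<chi> \<in># snd (last H) \<Longrightarrow>
     last H = (add_mset \<phi> (fst (last H) - {#\<phi>#}), add_mset \<chi> (snd (last H) - {#\<chi>#}))"
  by (metis prod.collapse insert_DiffM)

lemma last_ant2_suc_split:
  "\<phi> \<in># fst (last H) \<Longrightarrow> \<psi> \<in># fst (last H) \<Longrightarrow> \<phi> \<noteq> \<psi> \<Longrightarrow> \<chi> \<in># snd (last H) \<Longrightarrow>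
     last H = (add_mset \<phi> (add_mset \<psi> (fst (last H) - {#\<phi>#} - {#\<psi>#})),
               add_mset \<chi> (snd (last H) - {#\<chi>#}))"
  using add_mset_two by (metis prod.collapse insert_DiffM)

lemma sat_LAll:
  assumes no_ap: "\<And>Ps. \<not> ap H LAll Ps"
  shows "Mem x a \<in># fst (last H) \<Longrightarrow> Unv a A \<in># fst (last H) \<Longrightarrow> Lab x A \<in> dG H"
  using no_ap ap.LAll[OF last_ant2_split] by blast

lemma sat_REx:
  assumes no_ap: "\<And>Ps. \<not> ap H REx Ps"
  shows "Mem x a \<in># fst (last H) \<Longrightarrow> Exi a A \<in># snd (last H) \<Longrightarrow> Lab x A \<in> dD H"
  using no_ap ap.REx[OF last_ant_suc_split] by blast

lemma sat_LCndStar: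
  assumes no_ap: "\<And>Ps. \<not> ap H LCndStar Ps"
  shows "InN a x \<in># fst (last H) \<Longrightarrow> Lab x (Cond A B) \<in># fst (last H) \<Longrightarrow>
    Exi a A \<in> dD H \<or> (Exi a A \<in> dG H \<and> CondL x a A B \<in> dG H)"
  using no_ap ap.LCndStar[OF last_ant2_split] by blast

lemma sat_RBar:
  assumes no_ap: "\<And>Ps. \<not> ap H RBar Ps"
  shows "InN c x \<in># fst (last H) \<Longrightarrow> Sub c a \<in># fst (last H) \<Longrightarrow>
    CondL x a A B \<in># snd (last H) \<Longrightarrow> Exi c A \<in># snd (last H) \<or> Unv c (Imp A B) \<in> dD H"
  using no_ap ap.RBar[OF last_ant2_suc_split] by fastforce

lemma sat_Ref:
  assumes no_ap: "\<And>Ps. \<not> ap H Ref Ps"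
  shows "a \<in> seq_nlabs (last H) \<Longrightarrow> Sub a a \<in># fst (last H)"
  using no_ap ap.Ref[of H "fst (last H)" "snd (last H)" a] by auto

lemma sat_Tr:
  assumes no_ap: "\<And>Ps. \<not> ap H Tr Ps"
  shows "Sub a b \<in># fst (last H) \<Longrightarrow> Sub b c \<in># fst (last H) \<Longrightarrow> Sub a c \<in># fst (last H)"
  using no_ap ap.Tr[OF last_ant2_split] by (cases "a = b") fastforce+

lemma sat_LSub:
  assumes no_ap: "\<And>Ps. \<not> ap H LSub Ps"
  shows "Mem x a \<in># fst (last H) \<Longrightarrow> Sub a b \<in># fst (last H) \<Longrightarrow> Mem x b \<in># fst (last H)"
  using no_ap ap.LSub[OF last_ant2_split] by fastforce

lemma sat_MonAll:
  assumes no_ap: "\<And>Ps. \<not> ap H MonAll Ps"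
  shows "Sub b a \<in># fst (last H) \<Longrightarrow> Unv a A \<in># fst (last H) \<Longrightarrow> Unv b A \<in># fst (last H)"
  using no_ap ap.MonAll[OF last_ant2_split] by fastforce

context
  fixes H :: "sequent list"
  assumes no_ap: "\<And>r Ps. \<not> ap H r Ps"
begin

lemma ant_fulfilled_if_no_ap:
  assumes \<phi>: "\<phi> \<in># fst (last H)"
  shows "ant_fulfilled H \<phi>"
proof (cases \<phi>)
  case (Lab x F)
  then show ?thesis
    using \<phi> no_ap ap.LAnd[OF last_ant_split] ap.LOr[OF last_ant_split] ap.LImp[OF last_ant_split]
    by (cases F) (clarsimp; blast)+
next
  case (Exi a A)
  obtain x where "x \<notin> seq_wlabs (last H)"
    using ex_fresh_wlab by blast
  then show ?thesis
    using Exi \<phi> no_ap ap.LEx[OF last_ant_split[of "Exi a A" H]] by (clarsimp; blast)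
next
  case (CondL x a A B)
  obtain c where "c \<notin> seq_nlabs (last H)"
    using ex_fresh_nlab by blast
  then show ?thesis
    using CondL \<phi> no_ap ap.LBar[OF last_ant_split[of "CondL x a A B" H]] by (clarsimp; blast)
qed simp_all

lemma suc_fulfilled_if_no_ap:
  assumes \<phi>: "\<phi> \<in># snd (last H)"
  shows "suc_fulfilled H \<phi>"
proof (cases \<phi>)
  case (Lab x F)
  show ?thesis
  proof (cases F)
    case (Cond A B)
    obtain a where "a \<notin> seq_nlabs (last H)"
      using ex_fresh_nlab by blast
    then show ?thesis
      using Lab Cond \<phi> no_ap ap.RCnd[OF last_suc_split[of "Lab x (Cond A B)" H]] by (clarsimp; blast)
  qed (use Lab \<phi> no_ap ap.RAnd[OF last_suc_split] ap.ROr[OF last_suc_split] ap.RImp[OF last_suc_split]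
       in \<open>(clarsimp; blast)+\<close>)
next
  case (Unv a A)
  obtain x where "x \<notin> seq_wlabs (last H)"
    using ex_fresh_wlab by blast
  then show ?thesis
    using Unv \<phi> no_ap ap.RAll[OF last_suc_split[of "Unv a A" H]] by (clarsimp; blast)
qed simp_all

lemma saturated_if_no_ap:
  assumes "removed_fulfilled H" and "\<not> initial (last H)"
  shows "saturated H"
proof -
  have ant: "ant_fulfilled H \<phi>" if "\<phi> \<in> dG H" for \<phi>
    using assms(1) that ant_fulfilled_if_no_ap unfolding removed_fulfilled_def by blast
  have suc: "suc_fulfilled H \<phi>" if "\<phi> \<in> dD H" for \<phi>
    using assms(1) that suc_fulfilled_if_no_ap unfolding removed_fulfilled_def by blast
  note cumulative =
    ant[of "Lab _ (Conj _ _)", simplified] ant[of "Lab _ (Disj _ _)", simplified]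
    ant[of "Lab _ (Imp _ _)", simplified] ant[of "Exi _ _", simplified]
    ant[of "CondL _ _ _ _", simplified]
    suc[of "Lab _ (Conj _ _)", simplified] suc[of "Lab _ (Disj _ _)", simplified]
    suc[of "Lab _ (Cond _ _)", simplified] suc[of "Unv _ _", simplified]
  note local = sat_LAll[OF no_ap] sat_REx[OF no_ap] sat_LCndStar[OF no_ap] sat_RBar[OF no_ap]
    sat_Ref[OF no_ap] sat_Tr[OF no_ap] sat_LSub[OF no_ap] sat_MonAll[OF no_ap]
    suc_fulfilled_if_no_ap[of "Lab _ (Imp _ _)", simplified]
  show ?thesis
    unfolding saturated_def Let_def
    using assms(2) unfolding initial_def
    by (intro conjI allI impI; blast dest: cumulative local)
qed

end

theorem stuck_branch_saturated:
  assumes "branch x0 A0 H" and "\<not> (\<exists>r Ps. step H r Ps)"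
  shows "initial (last H) \<or> saturated H"
  using assms branch_invariants no_step_no_ap saturated_if_no_ap by blast

text \<open>A label's weight plus twice the conditional degree of a formula attached to it never
  exceeds \<open>2 \<cdot> deg A\<^sub>0\<close>: R>, L\<exists> and R\<forall> each add one to the weight, and R> passes from
  \<open>x : A > B\<close> to \<open>a \<Vdash>\<^sup>\<exists> A\<close>, lowering the degree; L| keeps the weight.\<close>

fun within_budget :: "nat \<Rightarrow> (wlab \<Rightarrow> origin list) \<Rightarrow> (nlab \<Rightarrow> origin list) \<Rightarrow> lf \<Rightarrow> bool" where
  "within_budget D pw pn (Lab y F) \<longleftrightarrow> 2 * cond_degree F + weight (pw y) \<le> 2 * D"
| "within_budget D pw pn (CondL x a A B) \<longleftrightarrow> 2 * cond_degree (Cond A B) + weight (pw x) \<le> 2 * D"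
| "within_budget D pw pn (Exi a F) \<longleftrightarrow> 2 * cond_degree F + weight (pn a) + 1 \<le> 2 * D"
| "within_budget D pw pn (Unv a F) \<longleftrightarrow> 2 * cond_degree F + weight (pn a) + 1 \<le> 2 * D"
| "within_budget D pw pn (Mem y a) \<longleftrightarrow> weight (pw y) = weight (pn a) + 1"
| "within_budget D pw pn (Sub a b) \<longleftrightarrow> weight (pn a) = weight (pn b)"
| "within_budget D pw pn (InN a x) \<longleftrightarrow> weight (pn a) = weight (pw x) + 1"

lemma within_budget_cong:
  "(\<And>y. y \<in> wlabs \<phi> \<Longrightarrow> pw' y = pw y) \<Longrightarrow> (\<And>a. a \<in> nlabs \<phi> \<Longrightarrow> pn' a = pn a) \<Longrightarrow>
     within_budget D pw' pn' \<phi> \<longleftrightarrow> within_budget D pw pn \<phi>"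
  by (cases \<phi>) auto

definition world_origin :: "sequent list \<Rightarrow> (wlab \<Rightarrow> origin list) \<Rightarrow> (nlab \<Rightarrow> origin list) \<Rightarrow> wlab \<Rightarrow> bool"
  where "world_origin H pw pn y \<longleftrightarrow> pw y = []
    \<or> (\<exists>a A. pw y = ViaEx A # pn a \<and> Mem y a \<in> dG H \<and> Lab y A \<in> dG H)
    \<or> (\<exists>a A. pw y = ViaAll A # pn a \<and> Mem y a \<in> dG H \<and> Lab y A \<in> dD H)"

definition nbhd_origin :: "sequent list \<Rightarrow> (wlab \<Rightarrow> origin list) \<Rightarrow> (nlab \<Rightarrow> origin list) \<Rightarrow> nlab \<Rightarrow> bool"
  where "nbhd_origin H pw pn c \<longleftrightarrow>
    (\<exists>x A B. pn c = ViaCnd A B # pw x \<and> InN c x \<in> dG H \<and> Exi c A \<in> dG H \<and> CondL x c A B \<in> dD H)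
    \<or> (\<exists>d x A B. pn c = ViaBar A B # pn d \<and> InN c x \<in> dG H \<and> InN d x \<in> dG H \<and> Sub c d \<in> dG H
          \<and> Exi c A \<in> dG H \<and> Unv c (Imp A B) \<in> dG H)"

definition ancestry_inv :: "fm \<Rightarrow> sequent list \<Rightarrow> (wlab \<Rightarrow> origin list) \<Rightarrow> (nlab \<Rightarrow> origin list) \<Rightarrow> bool"
  where "ancestry_inv A0 H pw pn \<longleftrightarrow>
    inj_on pw (seq_wlabs (last H)) \<and> inj_on pn (seq_nlabs (last H)) \<and>
    (\<forall>y \<in> seq_wlabs (last H).
       pw y \<in> ancestries (fm_closure A0) (2 * cond_degree A0) \<and> world_origin H pw pn y) \<and>
    (\<forall>c \<in> seq_nlabs (last H).
       pn c \<in> ancestries (fm_closure A0) (2 * cond_degree A0) \<and> nbhd_origin H pw pn c) \<and>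
    (\<forall>\<phi> \<in> dG H \<union> dD H. within_budget (cond_degree A0) pw pn \<phi>)"

lemma ancestry_invD:
  assumes "ancestry_inv A0 H pw pn"
  shows ancestry_inv_inj_world: "inj_on pw (seq_wlabs (last H))"
    and ancestry_inv_inj_nbhd: "inj_on pn (seq_nlabs (last H))"
    and ancestry_inv_world: "y \<in> seq_wlabs (last H) \<Longrightarrow>
      pw y \<in> ancestries (fm_closure A0) (2 * cond_degree A0) \<and> world_origin H pw pn y"
    and ancestry_inv_nbhd: "c \<in> seq_nlabs (last H) \<Longrightarrow>
      pn c \<in> ancestries (fm_closure A0) (2 * cond_degree A0) \<and> nbhd_origin H pw pn c"
    and ancestry_inv_budget: "\<phi> \<in> dG H \<or> \<phi> \<in> dD H \<Longrightarrow> within_budget (cond_degree A0) pw pn \<phi>"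
  using assms by (auto simp: ancestry_inv_def)

lemma ancestry_inv_root: "ancestry_inv A0 [root x0 A0] (\<lambda>_. []) (\<lambda>_. [])"
  by (auto simp: ancestry_inv_def world_origin_def ancestries_def root_def seq_wlabs_def seq_nlabs_def)

lemma world_origin_snoc:
  assumes "world_origin H pw pn y" and "pw' y = pw y" and "\<And>a. Mem y a \<in> dG H \<Longrightarrow> pn' a = pn a"
  shows "world_origin (H @ [S]) pw' pn' y"
  using assms unfolding world_origin_def by force

lemma nbhd_origin_snoc:
  assumes "nbhd_origin H pw pn c" and "pn' c = pn c"
    and "\<And>x. InN c x \<in> dG H \<Longrightarrow> pw' x = pw x" and "\<And>d. Sub c d \<in> dG H \<Longrightarrow> pn' d = pn d"
  shows "nbhd_origin (H @ [S]) pw' pn' c"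
proof -
  from assms(1) consider
      x A B where "pn c = ViaCnd A B # pw x" "InN c x \<in> dG H" "Exi c A \<in> dG H" "CondL x c A B \<in> dD H"
    | d x A B where "pn c = ViaBar A B # pn d" "InN c x \<in> dG H" "InN d x \<in> dG H" "Sub c d \<in> dG H"
        "Exi c A \<in> dG H" "Unv c (Imp A B) \<in> dG H"
    unfolding nbhd_origin_def by blast
  then show ?thesis
  proof cases
    case (1 x A B)
    then have "pn' c = ViaCnd A B # pw' x"
      using assms(2,3) by simp
    then show ?thesis
      using 1 unfolding nbhd_origin_def by auto
  next
    case (2 d x A B)
    then have "pn' c = ViaBar A B # pn' d"
      using assms(2,4) by simp
    then show ?thesis
      using 2 unfolding nbhd_origin_def dG_snoc by blast
  qed
qed

lemma ancestry_inv_snoc: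
  assumes wf: "branch_wf A0 H" and inv: "ancestry_inv A0 H pw pn"
    and pw': "\<And>y. y \<in> seq_wlabs (last H) \<Longrightarrow> pw' y = pw y"
    and pn': "\<And>a. a \<in> seq_nlabs (last H) \<Longrightarrow> pn' a = pn a"
    and inj: "inj_on pw' (seq_wlabs S)" "inj_on pn' (seq_nlabs S)"
    and new_worlds: "\<And>y. y \<in> seq_wlabs S - seq_wlabs (last H) \<Longrightarrow>
      pw' y \<in> ancestries (fm_closure A0) (2 * cond_degree A0) \<and> world_origin (H @ [S]) pw' pn' y"
    and new_nbhds: "\<And>c. c \<in> seq_nlabs S - seq_nlabs (last H) \<Longrightarrow>
      pn' c \<in> ancestries (fm_closure A0) (2 * cond_degree A0) \<and> nbhd_origin (H @ [S]) pw' pn' c"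
    and budget: "\<And>\<phi>. \<phi> \<in># fst S \<or> \<phi> \<in># snd S \<Longrightarrow> within_budget (cond_degree A0) pw' pn' \<phi>"
  shows "ancestry_inv A0 (H @ [S]) pw' pn'"
proof -
  note labels = branch_wf_labels[OF wf]
  have worlds: "pw' y \<in> ancestries (fm_closure A0) (2 * cond_degree A0) \<and> world_origin (H @ [S]) pw' pn' y"
    if "y \<in> seq_wlabs S" for y
  proof (cases "y \<in> seq_wlabs (last H)")
    case True
    have "world_origin (H @ [S]) pw' pn' y"
      by (rule world_origin_snoc[where pw = pw and pn = pn])
        (use True ancestry_inv_world[OF inv True] pw' pn' labels[of "Mem y _"] in auto)
    then show ?thesis
      using ancestry_inv_world[OF inv True] pw'[OF True] by simp
  qed (use that new_worlds in blast)
  have nbhds: "pn' c \<in> ancestries (fm_closure A0) (2 * cond_degree A0) \<and> nbhd_origin (H @ [S]) pw' pn' c"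
    if "c \<in> seq_nlabs S" for c
  proof (cases "c \<in> seq_nlabs (last H)")
    case True
    have "nbhd_origin (H @ [S]) pw' pn' c"
      by (rule nbhd_origin_snoc[where pw = pw and pn = pn])
        (use True ancestry_inv_nbhd[OF inv True] pw' pn' labels[of "InN c _"] labels[of "Sub c _"] in auto)
    then show ?thesis
      using ancestry_inv_nbhd[OF inv True] pn'[OF True] by simp
  qed (use that new_nbhds in blast)
  have old_budget: "within_budget (cond_degree A0) pw' pn' \<phi>" if "\<phi> \<in> dG H \<or> \<phi> \<in> dD H" for \<phi>
    using within_budget_cong[of \<phi> pw' pw pn' pn] labels[OF that] pw' pn' ancestry_inv_budget[OF inv that]
    by blast
  show ?thesis
    unfolding ancestry_inv_def using inj worlds nbhds old_budget budget by auto
qed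

lemma static_within_budget:
  "ap H r Ps \<Longrightarrow> \<not> dynamic r \<Longrightarrow>
     \<forall>\<phi> \<in># fst (last H). within_budget D pw pn \<phi> \<Longrightarrow> \<forall>\<phi> \<in># snd (last H). within_budget D pw pn \<phi> \<Longrightarrow>
     \<forall>S \<in> set Ps. (\<forall>\<phi> \<in># fst S. within_budget D pw pn \<phi>) \<and> (\<forall>\<phi> \<in># snd S. within_budget D pw pn \<phi>)"
  by (induction rule: ap.cases) (simp_all add: dynamic_def max_def split: if_split_asm)

lemma ancestry_inv_static:
  assumes wf: "branch_wf A0 H" and inv: "ancestry_inv A0 H pw pn"
    and ap: "ap H r Ps" and static: "\<not> dynamic r" and S: "S \<in> set Ps"
  shows "ancestry_inv A0 (H @ [S]) pw pn"
proof (rule ancestry_inv_snoc[OF wf inv])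
  note ne = branch_wf_nonempty[OF wf]
  have "\<forall>\<phi>\<in># fst (last H). within_budget (cond_degree A0) pw pn \<phi>"
    "\<forall>\<phi>\<in># snd (last H). within_budget (cond_degree A0) pw pn \<phi>"
    using ancestry_inv_budget[OF inv] last_in_dG[OF ne] last_in_dD[OF ne] by blast+
  from static_within_budget[OF ap static this] S
  show "within_budget (cond_degree A0) pw pn \<phi>" if "\<phi> \<in># fst S \<or> \<phi> \<in># snd S" for \<phi>
    using that by blast
qed (use static_seq_wlabs[OF ap S static] static_seq_nlabs[OF ap S static]
       ancestry_inv_inj_world[OF inv] ancestry_inv_inj_nbhd[OF inv] in auto)

lemma within_budget_old:
  assumes wf: "branch_wf A0 H" and inv: "ancestry_inv A0 H pw pn"
    and \<phi>: "\<phi> \<in># fst (last H) \<or> \<phi> \<in># snd (last H)"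
    and "\<And>y. y \<in> seq_wlabs (last H) \<Longrightarrow> pw' y = pw y"
    and "\<And>a. a \<in> seq_nlabs (last H) \<Longrightarrow> pn' a = pn a"
  shows "within_budget (cond_degree A0) pw' pn' \<phi>"
proof -
  have "\<phi> \<in> dG H \<or> \<phi> \<in> dD H"
    using \<phi> last_in_dG last_in_dD branch_wf_nonempty[OF wf] by blast
  then show ?thesis
    using within_budget_cong[of \<phi> pw' pw pn' pn] branch_wf_labels[OF wf] assms(4,5)
      ancestry_inv_budget[OF inv]
    by blast
qed

lemma ancestry_inv_new_world:
  assumes wf: "branch_wf A0 H" and inv: "ancestry_inv A0 H pw pn"
    and wlabs_S: "seq_wlabs S = insert x (seq_wlabs (last H))" and fresh: "x \<notin> seq_wlabs (last H)"
    and nlabs_S: "seq_nlabs S = seq_nlabs (last H)"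
    and p: "p \<in> ancestries (fm_closure A0) (2 * cond_degree A0)" "p \<notin> pw ` seq_wlabs (last H)"
    and origin: "world_origin (H @ [S]) (pw(x := p)) pn x"
    and budget: "\<And>\<phi>. \<phi> \<in># fst S \<or> \<phi> \<in># snd S \<Longrightarrow> \<phi> \<in># fst (last H) \<or> \<phi> \<in># snd (last H)
      \<or> within_budget (cond_degree A0) (pw(x := p)) pn \<phi>"
  shows "ancestry_inv A0 (H @ [S]) (pw(x := p)) pn"
proof (rule ancestry_inv_snoc[OF wf inv])
  show "inj_on (pw(x := p)) (seq_wlabs S)"
    unfolding wlabs_S using fresh p(2) ancestry_inv_inj_world[OF inv] by (simp add: inj_on_fun_updI) blast
  have "(pw(x := p)) y = pw y" if "y \<in> seq_wlabs (last H)" for y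
    using fresh that by auto
  then show "within_budget (cond_degree A0) (pw(x := p)) pn \<phi>" if "\<phi> \<in># fst S \<or> \<phi> \<in># snd S" for \<phi>
    using budget[OF that] within_budget_old[OF wf inv] by blast
qed (use wlabs_S nlabs_S fresh p(1) origin ancestry_inv_inj_nbhd[OF inv] in auto)

lemma ancestry_inv_new_nbhd:
  assumes wf: "branch_wf A0 H" and inv: "ancestry_inv A0 H pw pn"
    and nlabs_S: "seq_nlabs S = insert c (seq_nlabs (last H))" and fresh: "c \<notin> seq_nlabs (last H)"
    and wlabs_S: "seq_wlabs S = seq_wlabs (last H)"
    and p: "p \<in> ancestries (fm_closure A0) (2 * cond_degree A0)" "p \<notin> pn ` seq_nlabs (last H)"
    and origin: "nbhd_origin (H @ [S]) pw (pn(c := p)) c"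
    and budget: "\<And>\<phi>. \<phi> \<in># fst S \<or> \<phi> \<in># snd S \<Longrightarrow> \<phi> \<in># fst (last H) \<or> \<phi> \<in># snd (last H)
      \<or> within_budget (cond_degree A0) pw (pn(c := p)) \<phi>"
  shows "ancestry_inv A0 (H @ [S]) pw (pn(c := p))"
proof (rule ancestry_inv_snoc[OF wf inv])
  show "inj_on (pn(c := p)) (seq_nlabs S)"
    unfolding nlabs_S using fresh p(2) ancestry_inv_inj_nbhd[OF inv] by (simp add: inj_on_fun_updI) blast
  have "(pn(c := p)) a = pn a" if "a \<in> seq_nlabs (last H)" for a
    using fresh that by auto
  then show "within_budget (cond_degree A0) pw (pn(c := p)) \<phi>" if "\<phi> \<in># fst S \<or> \<phi> \<in># snd S" for \<phi>
    using budget[OF that] within_budget_old[OF wf inv] by blast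
qed (use wlabs_S nlabs_S fresh p(1) origin ancestry_inv_inj_world[OF inv] in auto)

context
  fixes A0 H pw pn
  assumes wf: "branch_wf A0 H" and inv: "ancestry_inv A0 H pw pn"
begin

lemma world_parent:
  assumes y: "y \<in> seq_wlabs (last H)" and a: "a \<in> seq_nlabs (last H)"
    and a': "Mem y a' \<in> dG H" and eq: "pn a' = pn a"
  shows "Mem y a \<in># fst (last H)"
proof -
  have "a' \<in> seq_nlabs (last H)"
    using branch_wf_labels[OF wf, of "Mem y a'"] a' by simp
  then have "a' = a"
    using ancestry_inv_inj_nbhd[OF inv] a eq by (meson inj_onD)
  then show ?thesis
    using branch_wf_persistent_ant[OF wf a'] by simp
qed

lemma world_ancestry_ViaEx:
  assumes "ViaEx A # pn a \<in> pw ` seq_wlabs (last H)" and a: "a \<in> seq_nlabs (last H)"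
  shows "\<exists>y. Mem y a \<in># fst (last H) \<and> Lab y A \<in> dG H"
proof -
  obtain y where y: "y \<in> seq_wlabs (last H)" "pw y = ViaEx A # pn a"
    using assms(1) by auto
  then obtain a' where "Mem y a' \<in> dG H" "pn a' = pn a" "Lab y A \<in> dG H"
    using ancestry_inv_world[OF inv y(1)] unfolding world_origin_def by auto
  then show ?thesis
    using world_parent[OF y(1) a] by blast
qed

lemma world_ancestry_ViaAll:
  assumes "ViaAll A # pn a \<in> pw ` seq_wlabs (last H)" and a: "a \<in> seq_nlabs (last H)"
  shows "\<exists>y. Mem y a \<in># fst (last H) \<and> Lab y A \<in> dD H"
proof -
  obtain y where y: "y \<in> seq_wlabs (last H)" "pw y = ViaAll A # pn a"
    using assms(1) by auto
  then obtain a' where "Mem y a' \<in> dG H" "pn a' = pn a" "Lab y A \<in> dD H"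
    using ancestry_inv_world[OF inv y(1)] unfolding world_origin_def by auto
  then show ?thesis
    using world_parent[OF y(1) a] by blast
qed

lemma nbhd_ancestry_ViaCnd:
  assumes "ViaCnd A B # pw x \<in> pn ` seq_nlabs (last H)" and x: "x \<in> seq_wlabs (last H)"
  shows "\<exists>c. InN c x \<in># fst (last H) \<and> Exi c A \<in> dG H \<and> CondL x c A B \<in># snd (last H)"
proof -
  obtain c x' where c: "c \<in> seq_nlabs (last H)" and
    x': "pw x' = pw x" "InN c x' \<in> dG H" "Exi c A \<in> dG H" "CondL x' c A B \<in> dD H"
    using assms(1) ancestry_inv_nbhd[OF inv] unfolding nbhd_origin_def by fastforce
  have "x' \<in> seq_wlabs (last H)"
    using branch_wf_labels[OF wf, of "InN c x'"] x'(2) by simp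
  then have "x' = x"
    using ancestry_inv_inj_world[OF inv] x x'(1) by (meson inj_onD)
  then have "InN c x \<in># fst (last H)" "CondL x c A B \<in># snd (last H)"
    using x' branch_wf_persistent_ant[OF wf] branch_wf_persistent_suc[OF wf] by auto
  then show ?thesis
    using x'(3) by blast
qed

lemma nbhd_ancestry_ViaBar:
  assumes "ViaBar A B # pn d \<in> pn ` seq_nlabs (last H)" and d: "d \<in> seq_nlabs (last H)"
    and "InN d x \<in> dG H"
  shows "\<exists>c. InN c x \<in># fst (last H) \<and> Sub c d \<in># fst (last H) \<and> Exi c A \<in> dG H
    \<and> Unv c (Imp A B) \<in># fst (last H)"
proof -
  obtain c d' x' where d': "pn d' = pn d" "InN c x' \<in> dG H" "InN d' x' \<in> dG H" "Sub c d' \<in> dG H"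
      "Exi c A \<in> dG H" "Unv c (Imp A B) \<in> dG H"
    using assms(1) ancestry_inv_nbhd[OF inv] unfolding nbhd_origin_def by fastforce
  have "d' \<in> seq_nlabs (last H)"
    using branch_wf_labels[OF wf, of "Sub c d'"] d'(4) by simp
  then have "d' = d"
    using ancestry_inv_inj_nbhd[OF inv] d d'(1) by (meson inj_onD)
  then have "x' = x"
    using branch_wf_InN_unique[OF wf] d'(3) assms(3) by blast
  then have "InN c x \<in># fst (last H)" "Sub c d \<in># fst (last H)" "Unv c (Imp A B) \<in># fst (last H)"
    using d' \<open>d' = d\<close> branch_wf_persistent_ant[OF wf] by auto
  then show ?thesis
    using d'(5) by blast
qed

text \<open>L| adds \<open>c \<subseteq> d\<close> together with \<open>c \<Vdash>\<^sup>\<forall> A \<rightarrow> B\<close>, and Mon\<forall> pushes the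
  \<open>\<Vdash>\<^sup>\<forall>\<close>-formulas of \<open>d\<close> down to \<open>c\<close>; so a repeated L| instance would already be
  satisfied.\<close>

lemma bar_run_Unv:
  assumes no_MonAll: "\<And>Ps. \<not> ap H MonAll Ps"
  shows "c \<in> seq_nlabs (last H) \<Longrightarrow> (A, B) \<in> set (bar_run (pn c)) \<Longrightarrow> Unv c (Imp A B) \<in># fst (last H)"
proof (induction "length (pn c)" arbitrary: c rule: less_induct)
  case less
  then obtain d A' B' where run: "pn c = ViaBar A' B' # pn d" and
    Sub: "Sub c d \<in> dG H" and Unv: "Unv c (Imp A' B') \<in> dG H"
    using ancestry_inv_nbhd[OF inv less.prems(1)] unfolding nbhd_origin_def by auto
  have "d \<in> seq_nlabs (last H)"
    using branch_wf_labels[OF wf, of "Sub c d"] Sub by simp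
  then have "(A, B) \<in> set (bar_run (pn d)) \<Longrightarrow> Unv d (Imp A B) \<in># fst (last H)"
    using less.hyps run by simp
  moreover have "Sub c d \<in># fst (last H)" "Unv c (Imp A' B') \<in># fst (last H)"
    using branch_wf_persistent_ant[OF wf] Sub Unv by simp_all
  ultimately show ?case
    using less.prems(2) run sat_MonAll[OF no_MonAll] by auto
qed

end

context
  fixes A0 H pw pn
  assumes wf: "branch_wf A0 H" and inv: "ancestry_inv A0 H pw pn"
begin

lemma ancestry_inv_RAll:
  assumes last: "last H = (G, add_mset (Unv a A) D)" and fresh: "x \<notin> seq_wlabs (last H)"
    and unsat: "\<not> (\<exists>y. Mem y a \<in># G \<and> Lab y A \<in> dD H)"
    and S: "S = (add_mset (Mem x a) G, add_mset (Lab x A) D)"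
  shows "ancestry_inv A0 (H @ [S]) (pw(x := ViaAll A # pn a)) pn"
proof (rule ancestry_inv_new_world[OF wf inv _ fresh])
  have Unv: "Unv a A \<in> dD H"
    using last_in_dD[OF branch_wf_nonempty[OF wf], of "Unv a A"] last by simp
  have a: "a \<in> seq_nlabs (last H)"
    using last by simp
  have budget: "2 * cond_degree A + weight (pn a) + 1 \<le> 2 * cond_degree A0"
    using ancestry_inv_budget[OF inv, of "Unv a A"] Unv by simp
  show "ViaAll A # pn a \<in> ancestries (fm_closure A0) (2 * cond_degree A0)"
    using branch_wf_closure[OF wf, of "Unv a A"] Unv ancestry_inv_nbhd[OF inv a] budget
    by (simp add: ancestries_def)
  show "ViaAll A # pn a \<notin> pw ` seq_wlabs (last H)"
    using world_ancestry_ViaAll[OF wf inv _ a] unsat last by auto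
  show "\<phi> \<in># fst (last H) \<or> \<phi> \<in># snd (last H)
      \<or> within_budget (cond_degree A0) (pw(x := ViaAll A # pn a)) pn \<phi>"
    if "\<phi> \<in># fst S \<or> \<phi> \<in># snd S" for \<phi>
    using that S last budget by auto
qed (use S last in \<open>auto simp: world_origin_def\<close>)

lemma ancestry_inv_LEx:
  assumes last: "last H = (add_mset (Exi a A) G, D)" and fresh: "x \<notin> seq_wlabs (last H)"
    and unsat: "\<not> (\<exists>y. Mem y a \<in># fst (last H) \<and> Lab y A \<in> dG H)"
    and S: "S = (add_mset (Mem x a) (add_mset (Lab x A) G), D)"
  shows "ancestry_inv A0 (H @ [S]) (pw(x := ViaEx A # pn a)) pn"
proof (rule ancestry_inv_new_world[OF wf inv _ fresh])
  have Exi: "Exi a A \<in> dG H"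
    using last_in_dG[OF branch_wf_nonempty[OF wf], of "Exi a A"] last by simp
  have a: "a \<in> seq_nlabs (last H)"
    using last by simp
  have budget: "2 * cond_degree A + weight (pn a) + 1 \<le> 2 * cond_degree A0"
    using ancestry_inv_budget[OF inv, of "Exi a A"] Exi by simp
  show "ViaEx A # pn a \<in> ancestries (fm_closure A0) (2 * cond_degree A0)"
    using branch_wf_closure[OF wf, of "Exi a A"] Exi ancestry_inv_nbhd[OF inv a] budget
    by (simp add: ancestries_def)
  show "ViaEx A # pn a \<notin> pw ` seq_wlabs (last H)"
    using world_ancestry_ViaEx[OF wf inv _ a] unsat by auto
  show "\<phi> \<in># fst (last H) \<or> \<phi> \<in># snd (last H)
      \<or> within_budget (cond_degree A0) (pw(x := ViaEx A # pn a)) pn \<phi>"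
    if "\<phi> \<in># fst S \<or> \<phi> \<in># snd S" for \<phi>
    using that S last budget by auto
qed (use S last in \<open>auto simp: world_origin_def\<close>)

lemma ancestry_inv_RCnd:
  assumes last: "last H = (G, add_mset (Lab x (Cond A B)) D)" and fresh: "a \<notin> seq_nlabs (last H)"
    and unsat: "\<not> (\<exists>b. InN b x \<in># fst (last H) \<and> Exi b A \<in> dG H \<and> CondL x b A B \<in># snd (last H))"
    and S: "S = (add_mset (InN a x) (add_mset (Exi a A) G), add_mset (CondL x a A B) D)"
  shows "ancestry_inv A0 (H @ [S]) pw (pn(a := ViaCnd A B # pw x))"
proof (rule ancestry_inv_new_nbhd[OF wf inv _ fresh])
  have Lab: "Lab x (Cond A B) \<in> dD H"
    using last_in_dD[OF branch_wf_nonempty[OF wf], of "Lab x (Cond A B)"] last by simp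
  have x: "x \<in> seq_wlabs (last H)"
    using last by simp
  have budget: "2 * Suc (max (cond_degree A) (cond_degree B)) + weight (pw x) \<le> 2 * cond_degree A0"
    using ancestry_inv_budget[OF inv, of "Lab x (Cond A B)"] Lab by simp
  have "Cond A B \<in> fm_closure A0"
    using branch_wf_closure[OF wf, of "Lab x (Cond A B)"] Lab by simp
  then have "A \<in> fm_closure A0 \<and> B \<in> fm_closure A0"
    using fm_closure_CondD by blast
  then show "ViaCnd A B # pw x \<in> ancestries (fm_closure A0) (2 * cond_degree A0)"
    using ancestry_inv_world[OF inv x] budget by (simp add: ancestries_def)
  show "ViaCnd A B # pw x \<notin> pn ` seq_nlabs (last H)"
    using nbhd_ancestry_ViaCnd[OF wf inv _ x] unsat by auto
  show "\<phi> \<in># fst (last H) \<or> \<phi> \<in># snd (last H)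
      \<or> within_budget (cond_degree A0) pw (pn(a := ViaCnd A B # pw x)) \<phi>"
    if "\<phi> \<in># fst S \<or> \<phi> \<in># snd S" for \<phi>
    using that S last budget by auto
  show "nbhd_origin (H @ [S]) pw (pn(a := ViaCnd A B # pw x)) a"
    unfolding nbhd_origin_def using S by (intro disjI1 exI[of _ x]) simp
qed (use S last in auto)

lemma ancestry_inv_LBar:
  assumes last: "last H = (add_mset (CondL x d A B) G, D)" and fresh: "c \<notin> seq_nlabs (last H)"
    and unsat: "\<not> (\<exists>d'. InN d' x \<in># fst (last H) \<and> Sub d' d \<in># fst (last H) \<and> Exi d' A \<in> dG H
      \<and> Unv d' (Imp A B) \<in># fst (last H))"
    and S: "S = (add_mset (InN c x) (add_mset (Sub c d) (add_mset (Exi c A) (add_mset (Unv c (Imp A B)) G))), D)"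
    and no_MonAll: "\<And>Ps. \<not> ap H MonAll Ps" and no_Ref: "\<And>Ps. \<not> ap H Ref Ps"
  shows "ancestry_inv A0 (H @ [S]) pw (pn(c := ViaBar A B # pn d))"
proof (rule ancestry_inv_new_nbhd[OF wf inv _ fresh])
  have CondL: "CondL x d A B \<in> dG H"
    using last_in_dG[OF branch_wf_nonempty[OF wf], of "CondL x d A B"] last by simp
  have InN: "InN d x \<in> dG H" and Exi: "Exi d A \<in> dG H"
    using branch_wf_CondL[OF wf CondL] by auto
  have d: "d \<in> seq_nlabs (last H)"
    using last by simp
  have budget: "2 * Suc (max (cond_degree A) (cond_degree B)) + weight (pw x) \<le> 2 * cond_degree A0"
    using ancestry_inv_budget[OF inv, of "CondL x d A B"] CondL by simp
  have weight_d: "weight (pn d) = weight (pw x) + 1"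
    using ancestry_inv_budget[OF inv, of "InN d x"] InN by simp
  have "(A, B) \<notin> set (bar_run (pn d))"
  proof
    assume "(A, B) \<in> set (bar_run (pn d))"
    then have "Unv d (Imp A B) \<in># fst (last H)"
      using bar_run_Unv[OF wf inv no_MonAll d] by blast
    moreover have "InN d x \<in># fst (last H)"
      using branch_wf_persistent_ant[OF wf InN] by simp
    ultimately show False
      using unsat sat_Ref[OF no_Ref d] Exi by blast
  qed
  moreover have "pn d \<in> ancestries (fm_closure A0) (2 * cond_degree A0)"
    using ancestry_inv_nbhd[OF inv d] by blast
  moreover have "Cond A B \<in> fm_closure A0"
    using branch_wf_closure[OF wf, of "CondL x d A B"] CondL by simp
  then have "A \<in> fm_closure A0 \<and> B \<in> fm_closure A0"
    using fm_closure_CondD by blast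
  ultimately show "ViaBar A B # pn d \<in> ancestries (fm_closure A0) (2 * cond_degree A0)"
    by (auto simp: ancestries_def admissible_distinct_bar_run)
  show "ViaBar A B # pn d \<notin> pn ` seq_nlabs (last H)"
    using nbhd_ancestry_ViaBar[OF wf inv _ d InN] unsat by auto
  show "\<phi> \<in># fst (last H) \<or> \<phi> \<in># snd (last H)
      \<or> within_budget (cond_degree A0) pw (pn(c := ViaBar A B # pn d)) \<phi>"
    if "\<phi> \<in># fst S \<or> \<phi> \<in># snd S" for \<phi>
    using that S last budget weight_d fresh d by auto
  show "nbhd_origin (H @ [S]) pw (pn(c := ViaBar A B # pn d)) c"
    unfolding nbhd_origin_def using S InN fresh d by (intro disjI2 exI[of _ d] exI[of _ x]) auto
qed (use S last in auto)

end

lemma ancestry_inv_step: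
  assumes wf: "branch_wf A0 H" and inv: "ancestry_inv A0 H pw pn"
    and step: "step H r Ps" and S: "S \<in> set Ps"
  shows "\<exists>pw' pn'. ancestry_inv A0 (H @ [S]) pw' pn'"
proof (cases "dynamic r")
  case False
  then show ?thesis
    using ancestry_inv_static[OF wf inv step_ap[OF step] False S] by blast
next
  case True
  note ap = step_ap[OF step]
  then show ?thesis
  proof cases
    case (RAll G a A D x)
    then show ?thesis
      using ancestry_inv_RAll[OF wf inv RAll(3-5)] S by auto
  next
    case (LEx a A G D x)
    then show ?thesis
      using ancestry_inv_LEx[OF wf inv LEx(3-5)] S by auto
  next
    case (RCnd G x A B D a)
    then show ?thesis
      using ancestry_inv_RCnd[OF wf inv RCnd(3-5)] S by auto
  next
    case (LBar x a A B G D c)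
    have no_static: "\<not> ap H r' Ps'" if "\<not> dynamic r'" for r' Ps'
      using step that LBar by (auto simp: step_def dynamic_def)
    have no_MonAll: "\<not> ap H MonAll Ps'" and no_Ref: "\<not> ap H Ref Ps'" for Ps'
      using no_static by (simp_all add: dynamic_def)
    show ?thesis
      using ancestry_inv_LBar[OF wf inv LBar(3-5) _ no_MonAll no_Ref] S LBar(2) by auto
  qed (use True in \<open>simp_all add: dynamic_def\<close>)
qed

lemma branch_ancestry_inv: "branch x0 A0 H \<Longrightarrow> \<exists>pw pn. ancestry_inv A0 H pw pn"
proof (induction rule: branch.induct)
  case start
  then show ?case
    using ancestry_inv_root by blast
next
  case (extend H r Ps S)
  then show ?case
    using ancestry_inv_step branch_invariants by blast
qed

section \<open>Termination\<close>

fun lf_shape :: "(wlab \<Rightarrow> origin list) \<Rightarrow> (nlab \<Rightarrow> origin list) \<Rightarrow> lf \<Rightarrow> nat \<times> origin list list \<times> fm list"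
  where
  "lf_shape pw pn (InN a x) = (0, [pn a, pw x], [])"
| "lf_shape pw pn (Mem x a) = (1, [pw x, pn a], [])"
| "lf_shape pw pn (Sub a b) = (2, [pn a, pn b], [])"
| "lf_shape pw pn (Lab x A) = (3, [pw x], [A])"
| "lf_shape pw pn (Exi a A) = (4, [pn a], [A])"
| "lf_shape pw pn (Unv a A) = (5, [pn a], [A])"
| "lf_shape pw pn (CondL x a A B) = (6, [pw x, pn a], [Cond A B])"

definition shapes :: "origin list set \<Rightarrow> fm set \<Rightarrow> (nat \<times> origin list list \<times> fm list) set" where
  "shapes P C = {..6} \<times> {ps. set ps \<subseteq> P \<and> length ps \<le> 2} \<times> {Fs. set Fs \<subseteq> C \<and> length Fs \<le> 1}"

lemma finite_shapes: "finite P \<Longrightarrow> finite C \<Longrightarrow> finite (shapes P C)"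
  by (simp add: shapes_def finite_lists_length_le)

lemma lf_shape_in_shapes:
  "pw ` wlabs \<phi> \<subseteq> P \<Longrightarrow> pn ` nlabs \<phi> \<subseteq> P \<Longrightarrow> lf_fms \<phi> \<subseteq> C \<Longrightarrow> lf_shape pw pn \<phi> \<in> shapes P C"
  by (cases \<phi>) (auto simp: shapes_def)

lemma inj_on_lf_shape:
  assumes "inj_on pw W" and "inj_on pn N"
  shows "inj_on (lf_shape pw pn) {\<phi>. wlabs \<phi> \<subseteq> W \<and> nlabs \<phi> \<subseteq> N}"
proof (rule inj_onI)
  fix \<phi> \<psi>
  assume "\<phi> \<in> {\<phi>. wlabs \<phi> \<subseteq> W \<and> nlabs \<phi> \<subseteq> N}" "\<psi> \<in> {\<phi>. wlabs \<phi> \<subseteq> W \<and> nlabs \<phi> \<subseteq> N}"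
    and "lf_shape pw pn \<phi> = lf_shape pw pn \<psi>"
  then show "\<phi> = \<psi>"
    using assms by (cases \<phi>; cases \<psi>; simp; meson inj_onD insert_subset)
qed

definition fact_bound :: "fm \<Rightarrow> nat" where
  "fact_bound A0 = card (shapes (ancestries (fm_closure A0) (2 * cond_degree A0)) (fm_closure A0))"

lemma card_le_fact_bound:
  assumes wf: "branch_wf A0 H" and inv: "ancestry_inv A0 H pw pn" and \<Phi>: "\<Phi> \<subseteq> dG H \<union> dD H"
  shows "card \<Phi> \<le> fact_bound A0"
proof -
  let ?P = "ancestries (fm_closure A0) (2 * cond_degree A0)"
  have "\<Phi> \<subseteq> {\<phi>. wlabs \<phi> \<subseteq> seq_wlabs (last H) \<and> nlabs \<phi> \<subseteq> seq_nlabs (last H)}"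
    using branch_wf_labels[OF wf] \<Phi> by blast
  then have "inj_on (lf_shape pw pn) \<Phi>"
    using inj_on_lf_shape[OF ancestry_inv_inj_world[OF inv] ancestry_inv_inj_nbhd[OF inv]]
    by (rule inj_on_subset[rotated])
  moreover have "lf_shape pw pn \<phi> \<in> shapes ?P (fm_closure A0)" if "\<phi> \<in> \<Phi>" for \<phi>
  proof (rule lf_shape_in_shapes)
    have \<phi>: "\<phi> \<in> dG H \<or> \<phi> \<in> dD H"
      using \<Phi> that by blast
    show "pw ` wlabs \<phi> \<subseteq> ?P" "pn ` nlabs \<phi> \<subseteq> ?P"
      using branch_wf_labels[OF wf \<phi>] ancestry_inv_world[OF inv] ancestry_inv_nbhd[OF inv] by blast+
    show "lf_fms \<phi> \<subseteq> fm_closure A0"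
      using branch_wf_closure[OF wf \<phi>] .
  qed
  then have "lf_shape pw pn ` \<Phi> \<subseteq> shapes ?P (fm_closure A0)"
    by blast
  moreover have "finite (shapes ?P (fm_closure A0))"
    by (simp add: finite_shapes finite_ancestries finite_fm_closure)
  ultimately show ?thesis
    unfolding fact_bound_def by (rule card_inj_on_le)
qed

definition fact_count :: "sequent list \<Rightarrow> nat" where
  "fact_count H = card (dG H) + card (dD H)"

lemma fact_count_le: "branch x0 A0 H \<Longrightarrow> fact_count H \<le> 2 * fact_bound A0"
  unfolding fact_count_def
  using branch_invariants branch_ancestry_inv card_le_fact_bound[of A0 H _ _ "dG H"]
    card_le_fact_bound[of A0 H _ _ "dD H"]
  by fastforce

lemma ap_new_fact:
  assumes wf: "branch_wf A0 H" and ap: "ap H r Ps" and S: "S \<in> set Ps"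
  shows "\<exists>\<phi>. \<phi> \<in># fst S \<and> \<phi> \<notin> dG H \<or> \<phi> \<in># snd S \<and> \<phi> \<notin> dD H"
proof -
  have old_ant: "\<phi> \<notin> dG H" if "persistent_ant \<phi>" "\<phi> \<notin># fst (last H)" for \<phi>
    using branch_wf_persistent_ant[OF wf] that by blast
  have old_suc: "\<phi> \<notin> dD H" if "persistent_suc \<phi>" "\<phi> \<notin># snd (last H)" for \<phi>
    using branch_wf_persistent_suc[OF wf] that by blast
  have fresh_world: "Mem x a \<notin> dG H" if "x \<notin> seq_wlabs (last H)" for x a
    using branch_wf_labels[OF wf, of "Mem x a"] that by auto
  have fresh_nbhd: "InN c x \<notin> dG H" if "c \<notin> seq_nlabs (last H)" for c x
    using branch_wf_labels[OF wf, of "InN c x"] that by auto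
  from ap S show ?thesis
    by cases (use old_ant old_suc fresh_world fresh_nbhd in auto)
qed

lemma fact_count_snoc:
  assumes wf: "branch_wf A0 H" and ap: "ap H r Ps" and S: "S \<in> set Ps"
  shows "fact_count H < fact_count (H @ [S])"
proof -
  have mono: "card (dG H) \<le> card (dG (H @ [S]))" "card (dD H) \<le> card (dD (H @ [S]))"
    using finite_dG finite_dD by (simp_all add: card_mono)
  from ap_new_fact[OF assms] consider "dG H \<subset> dG (H @ [S])" | "dD H \<subset> dD (H @ [S])"
    by auto
  then show ?thesis
  proof cases
    case 1
    then have "card (dG H) < card (dG (H @ [S]))"
      using psubset_card_mono finite_dG by blast
    then show ?thesis
      using mono unfolding fact_count_def by linarith
  next
    case 2
    then have "card (dD H) < card (dD (H @ [S]))"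
      using psubset_card_mono finite_dD by blast
    then show ?thesis
      using mono unfolding fact_count_def by linarith
  qed
qed

theorem proof_search_terminates:
  "\<not> (\<exists>f. f 0 = root x0 A0 \<and> (\<forall>k. \<exists>r Ps. step (map f [0..<Suc k]) r Ps \<and> f (Suc k) \<in> set Ps))"
proof
  assume "\<exists>f. f 0 = root x0 A0 \<and> (\<forall>k. \<exists>r Ps. step (map f [0..<Suc k]) r Ps \<and> f (Suc k) \<in> set Ps)"
  then obtain f where f0: "f 0 = root x0 A0"
    and steps: "\<And>k. \<exists>r Ps. step (map f [0..<Suc k]) r Ps \<and> f (Suc k) \<in> set Ps"
    by blast
  define H where "H k = map f [0..<Suc k]" for k
  have H_Suc: "H (Suc k) = H k @ [f (Suc k)]" for k
    by (simp add: H_def)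
  have branch: "branch x0 A0 (H k)" for k
  proof (induction k)
    case 0
    then show ?case
      using f0 branch.start by (simp add: H_def)
  next
    case (Suc k)
    then show ?case
      using steps[of k] branch.extend H_Suc unfolding H_def by metis
  qed
  have "k \<le> fact_count (H k)" for k
  proof (induction k)
    case (Suc k)
    obtain r Ps where "step (H k) r Ps" "f (Suc k) \<in> set Ps"
      using steps[of k] unfolding H_def by blast
    then have "fact_count (H k) < fact_count (H (Suc k))"
      using fact_count_snoc branch_invariants[OF branch] step_ap H_Suc by metis
    then show ?case
      using Suc by simp
  qed simp
  then show False
    using fact_count_le[OF branch, of "Suc (2 * fact_bound A0)"] by (metis not_less_eq_eq)
qed

theorem mainTheorem16:
  fixes x0 :: wlab and A0 :: fm
  shows "\<not> (\<exists>f :: nat \<Rightarrow> sequent. f 0 = root x0 A0 \<and>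
              (\<forall>k. \<exists>r Ps. step (map f [0..<Suc k]) r Ps \<and> f (Suc k) \<in> set Ps))
         \<and> (\<forall>H. branch x0 A0 H \<and> \<not> (\<exists>r Ps. step H r Ps)
              \<longrightarrow> initial (last H) \<or> saturated H)"
  using proof_search_terminates stuck_branch_saturated by blast

end
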